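(* Let $S=e_{12}+e_{23}\in M_3(\mathbb{C})$ and let $$\psi(x,z)=e^{xz}\left(Iz-Ix^{-1}+Sx^{-2}-S^2x^{-3}\right).$$ Let $\mathbb{A}$ be the set of all $\theta\in M_3(\mathbb{C})[x]$ for which there exists a matrix differential operator $B=B(z,\partial_z)$ with $(\psi B)(x,z)=\theta(x)\psi(x,z)$. Let $\Gamma$ be the set of all matrix polynomials of the form $$\begin{pmatrix} r_0^{11} & r_0^{12} & r_0^{13}\\ 0 & r_0^{22} & r_0^{23}\\ 0&0&r_0^{11}\end{pmatrix}+\begin{pmatrix} r_1^{11} & r_1^{12} & r_1^{13}\\ r_0^{22}-r_0^{11} & r_1^{22} & r_1^{23}\\ 0 & r_0^{22}-r_0^{11} & r_1^{11}+r_0^{23}-r_0^{12}\end{pmatrix}x$$ $$+\begin{pmatrix} r_2^{11} & r_2^{12} & r_2^{13}\\ r_1^{22}-r_1^{11}-r_0^{23}+r_0^{12} & r_2^{22} & r_2^{23}\\ r_0^{22}-r_0^{11} & r_1^{22}-r_1^{11} & r_2^{11}+r_1^{23}-r_1^{12}\end{pmatrix}x^2+\begin{pmatrix} r_3^{11} & r_3^{12} & r_3^{13}\\ r_3^{21} & r_3^{22} & r_3^{23}\\ r_1^{22}-2r_1^{11}-r_0^{23}+r_0^{12} & r_3^{32} & r_3^{33}\end{pmatrix}x^3$$ $$+\begin{pmatrix} r_4^{11} & r_4^{12} & r_4^{13}\\ r_4^{21} & r_4^{22} & r_4^{23}\\ r_3^{32}+r_3^{21}-r_2^{22}-r_2^{11}+r_1^{12}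 & r_4^{32} & r_4^{33}\end{pmatrix}x^4$$ $$+\begin{pmatrix} r_5^{11} & r_5^{12} & r_5^{13}\\ r_5^{21} & r_5^{22} & r_5^{23}\\ r_4^{32}+r_4^{21}-r_3^{33}-r_3^{22}-r_3^{11}+r_2^{23}+r_2^{12}-r_1^{13} & r_5^{32} & r_5^{33}\end{pmatrix}x^5+x^6p(x),$$ where $p\in M_3(\mathbb{C})[x]$ and all the variables $r_k^{ij}\in\mathbb{C}$ appearing are arbitrary. Then $\Gamma=\mathbb{A}$. Furthermore, $\mathbb{A}$ has the presentation $\mathbb{A}\cong\mathbb{C}\langle\alpha_2,\alpha_3\rangle/I$, where $I$ is the two-sided ideal $$I=\langle\alpha_2^3,\ \alpha_3^2-\alpha_3,\ (\alpha_3\alpha_2)^2\alpha_3-4\alpha_3\alpha_2^2\alpha_3\rangle.$$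
   Context: $e_{r,s}$ denotes the matrix with $1$ in entry $(r,s)$ and zeros elsewhere, and $I$ (in $\psi$) is the identity matrix. A matrix differential operator $B=B(z,\partial_z)$ acts on $\psi$ from the right: $(\psi B)(x,z)=\sum_{j=0}^m \partial_z^j\psi(x,z)\cdot b_j(z)$, with $b_j$ matrix-valued functions of $z$. $\mathbb{C}\langle\alpha_2,\alpha_3\rangle$ denotes the free (noncommutative) associative $\mathbb{C}$-algebra on $\alpha_2,\alpha_3$, and a presentation means an algebra isomorphism $\mathbb{C}\langle\alpha_2,\alpha_3\rangle/I\to\mathbb{A}$. *)

theory Defs
  imports "HOL-Analysis.Analysis" "HOL-Computational_Algebra.Polynomial"
begin

text \<open>M_3(C) is complex^3^3 with matrix product **. M_3(C)[x] is rendered as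
  3x3 matrices with entries in complex poly (canonically isomorphic).\<close>

definition mat3 :: "'a \<Rightarrow> 'a \<Rightarrow> 'a \<Rightarrow> 'a \<Rightarrow> 'a \<Rightarrow> 'a \<Rightarrow> 'a \<Rightarrow> 'a \<Rightarrow> 'a \<Rightarrow> 'a^3^3" where
  "mat3 a11 a12 a13 a21 a22 a23 a31 a32 a33 =
     (\<chi> i j. if i = 1 then (if j = 1 then a11 else if j = 2 then a12 else a13)
             else if i = 2 then (if j = 1 then a21 else if j = 2 then a22 else a23)
             else (if j = 1 then a31 else if j = 2 then a32 else a33))"

definition Smat :: "complex^3^3" where
  "Smat = mat3 0 1 0  0 0 1  0 0 0"

definition psi :: "complex \<Rightarrow> complex \<Rightarrow> complex^3^3" where
  "psi x z = (\<chi> i j. exp (x * z) *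
      ((mat z - mat (1 / x) :: complex^3^3) $ i $ j + Smat $ i $ j / x ^ 2
        - (Smat ** Smat) $ i $ j / x ^ 3))"

definition dpsi :: "nat \<Rightarrow> complex \<Rightarrow> complex \<Rightarrow> complex^3^3" where
  "dpsi j x z = (\<chi> a b. (deriv ^^ j) (\<lambda>w. psi x w $ a $ b) z)"

definition mpoly_eval :: "complex poly^3^3 \<Rightarrow> complex \<Rightarrow> complex^3^3" where
  "mpoly_eval \<theta> x = (\<chi> i j. poly (\<theta> $ i $ j) x)"

text \<open>The algebra A: theta such that psi B = theta psi for a matrix differential
  operator B = sum_{j=0}^m d_z^j (.) b_j(z) acting from the right.\<close>
definition A_set :: "(complex poly^3^3) set" where
  "A_set = {\<theta>. \<exists>(b :: nat \<Rightarrow> complex \<Rightarrow> complex^3^3) (m :: nat).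
      \<forall>x z. x \<noteq> 0 \<longrightarrow> (\<Sum>j\<le>m. dpsi j x z ** b j z) = mpoly_eval \<theta> x ** psi x z}"

text \<open>r k i j stands for r_k^{ij}.\<close>
definition gcoef :: "(nat \<Rightarrow> nat \<Rightarrow> nat \<Rightarrow> complex) \<Rightarrow> nat \<Rightarrow> complex^3^3" where
  "gcoef r k =
    (if k = 0 then
       mat3 (r 0 1 1) (r 0 1 2) (r 0 1 3)
            0 (r 0 2 2) (r 0 2 3)
            0 0 (r 0 1 1)
     else if k = 1 then
       mat3 (r 1 1 1) (r 1 1 2) (r 1 1 3)
            (r 0 2 2 - r 0 1 1) (r 1 2 2) (r 1 2 3)
            0 (r 0 2 2 - r 0 1 1) (r 1 1 1 + r 0 2 3 - r 0 1 2)
     else if k = 2 then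
       mat3 (r 2 1 1) (r 2 1 2) (r 2 1 3)
            (r 1 2 2 - r 1 1 1 - r 0 2 3 + r 0 1 2) (r 2 2 2) (r 2 2 3)
            (r 0 2 2 - r 0 1 1) (r 1 2 2 - r 1 1 1) (r 2 1 1 + r 1 2 3 - r 1 1 2)
     else if k = 3 then
       mat3 (r 3 1 1) (r 3 1 2) (r 3 1 3)
            (r 3 2 1) (r 3 2 2) (r 3 2 3)
            (r 1 2 2 - 2 * r 1 1 1 - r 0 2 3 + r 0 1 2) (r 3 3 2) (r 3 3 3)
     else if k = 4 then
       mat3 (r 4 1 1) (r 4 1 2) (r 4 1 3)
            (r 4 2 1) (r 4 2 2) (r 4 2 3)
            (r 3 3 2 + r 3 2 1 - r 2 2 2 - r 2 1 1 + r 1 1 2) (r 4 3 2) (r 4 3 3)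
     else
       mat3 (r 5 1 1) (r 5 1 2) (r 5 1 3)
            (r 5 2 1) (r 5 2 2) (r 5 2 3)
            (r 4 3 2 + r 4 2 1 - r 3 3 3 - r 3 2 2 - r 3 1 1 + r 2 2 3 + r 2 1 2 - r 1 1 3)
            (r 5 3 2) (r 5 3 3))"

definition gamma_poly :: "(nat \<Rightarrow> nat \<Rightarrow> nat \<Rightarrow> complex) \<Rightarrow> complex poly^3^3 \<Rightarrow> complex poly^3^3" where
  "gamma_poly r p = (\<chi> i j. (\<Sum>k<6. monom (gcoef r k $ i $ j) k) + monom 1 6 * p $ i $ j)"

definition Gamma_set :: "(complex poly^3^3) set" where
  "Gamma_set = {\<theta>. \<exists>r p. \<theta> = gamma_poly r p}"

datatype gen = A2 | A3

text \<open>Elements of the free associative algebra: finitely supported functions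
  from words to complex coefficients.\<close>
type_synonym ncpoly = "gen list \<Rightarrow> complex"

definition nc_fin :: "ncpoly \<Rightarrow> bool" where
  "nc_fin f \<longleftrightarrow> finite {w. f w \<noteq> 0}"

definition nc_mon :: "gen list \<Rightarrow> ncpoly" where
  "nc_mon u = (\<lambda>w. if w = u then 1 else 0)"

definition nc_mult :: "ncpoly \<Rightarrow> ncpoly \<Rightarrow> ncpoly" where
  "nc_mult f g = (\<lambda>w. \<Sum>i\<le>length w. f (take i w) * g (drop i w))"

inductive_set nc_ideal :: "ncpoly set \<Rightarrow> ncpoly set" for G where
  gen: "g \<in> G \<Longrightarrow> g \<in> nc_ideal G"
| zero: "(\<lambda>w. 0) \<in> nc_ideal G"
| add: "f \<in> nc_ideal G \<Longrightarrow> g \<in> nc_ideal G \<Longrightarrow> (\<lambda>w. f w + g w) \<in> nc_ideal G"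
| lmult: "f \<in> nc_ideal G \<Longrightarrow> nc_fin a \<Longrightarrow> nc_mult a f \<in> nc_ideal G"
| rmult: "f \<in> nc_ideal G \<Longrightarrow> nc_fin a \<Longrightarrow> nc_mult f a \<in> nc_ideal G"

definition rel_I :: "ncpoly set" where
  "rel_I = nc_ideal
     { nc_mon [A2, A2, A2],
       (\<lambda>w. nc_mon [A3, A3] w - nc_mon [A3] w),
       (\<lambda>w. nc_mon [A3, A2, A3, A2, A3] w - 4 * nc_mon [A3, A2, A2, A3] w) }"

definition msmult :: "complex \<Rightarrow> complex poly^3^3 \<Rightarrow> complex poly^3^3" where
  "msmult c M = (\<chi> i j. smult c (M $ i $ j))"

fun gen_val :: "complex poly^3^3 \<Rightarrow> complex poly^3^3 \<Rightarrow> gen \<Rightarrow> complex poly^3^3" where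
  "gen_val a2 a3 A2 = a2"
| "gen_val a2 a3 A3 = a3"

definition word_val :: "complex poly^3^3 \<Rightarrow> complex poly^3^3 \<Rightarrow> gen list \<Rightarrow> complex poly^3^3" where
  "word_val a2 a3 w = foldr (\<lambda>l M. gen_val a2 a3 l ** M) w (mat 1)"

definition nc_eval :: "complex poly^3^3 \<Rightarrow> complex poly^3^3 \<Rightarrow> ncpoly \<Rightarrow> complex poly^3^3" where
  "nc_eval a2 a3 f = (\<Sum>w\<in>{w. f w \<noteq> 0}. msmult (f w) (word_val a2 a3 w))"

end

theory Submission
  imports Defs
begin

text \<open>
  Write T = x + S and K = T^(-1) = x^(-1) - x^(-2) S + x^(-3) S^2, so that psi = e^(xz) (z - K).
  For B = sum_j d_z^j b_j(z) one finds psi B = e^(xz) ((z - K) beta + beta'), where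
  beta(x) = sum_j x^j b_j(z) and the prime is d/dx. Hence theta lies in A iff for every z some
  matrix polynomial beta, of degree bounded independently of z, solves
  (z - K) beta + beta' = theta (z - K).

  This identifies A with W = {c0 + c1 S + c2 S^2 + T Q T}. For theta = c(S) + T Q T take
  beta = c(S) + T G where z G + G' = z Q T - Q, a first order system that is always solvable
  in polynomials. Conversely, z = 0 gives theta = (K beta - beta') T; writing
  beta = beta0 + x beta1 + x^2 beta2 + T Y (possible since x^3 = T adj(T)) turns this into
  theta = D + K (D S - S D) - T (beta2 + Y') T with D = beta0 - S beta1 + S^2 beta2. The middle
  term has only negative powers of x, so D commutes with S and is a polynomial in S.
  Comparing coefficients up to x^5, and using adj(T) (T Q T) adj(T) = x^6 Q, identifies W with
  Gamma.

  For the presentation alpha2 goes to S and alpha3 to E = T e31 T. The normal words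
  S^i (E S)^n E S^j (i, j < 3) map to (2x)^n T e(3-i, 1+j) T, so together with 1, S, S^2 they
  span W; the relations reduce every word to a multiple of a normal word, and coefficients of
  adj(T) M adj(T) are coordinate functionals showing that the images of the normal words are
  linearly independent, which determines the kernel.
\<close>

lemma num3_neq [simp]:
  "(2::3) \<noteq> 1" "(3::3) \<noteq> 1" "(3::3) \<noteq> 2" "(1::3) \<noteq> 2" "(1::3) \<noteq> 3" "(2::3) \<noteq> 3"
  by (simp_all add: eq_commute)

lemma mat3_nth [simp]:
  "mat3 a11 a12 a13 a21 a22 a23 a31 a32 a33 $ 1 $ 1 = a11"
  "mat3 a11 a12 a13 a21 a22 a23 a31 a32 a33 $ 1 $ 2 = a12"
  "mat3 a11 a12 a13 a21 a22 a23 a31 a32 a33 $ 1 $ 3 = a13"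
  "mat3 a11 a12 a13 a21 a22 a23 a31 a32 a33 $ 2 $ 1 = a21"
  "mat3 a11 a12 a13 a21 a22 a23 a31 a32 a33 $ 2 $ 2 = a22"
  "mat3 a11 a12 a13 a21 a22 a23 a31 a32 a33 $ 2 $ 3 = a23"
  "mat3 a11 a12 a13 a21 a22 a23 a31 a32 a33 $ 3 $ 1 = a31"
  "mat3 a11 a12 a13 a21 a22 a23 a31 a32 a33 $ 3 $ 2 = a32"
  "mat3 a11 a12 a13 a21 a22 a23 a31 a32 a33 $ 3 $ 3 = a33"
  by (simp_all add: mat3_def)

lemma mat3_eta: "M = mat3 (M$1$1) (M$1$2) (M$1$3) (M$2$1) (M$2$2) (M$2$3) (M$3$1) (M$3$2) (M$3$3)"
  unfolding vec_eq_iff forall_3 by simp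

lemma mat3_eq_iff:
  "mat3 a11 a12 a13 a21 a22 a23 a31 a32 a33 = mat3 b11 b12 b13 b21 b22 b23 b31 b32 b33 \<longleftrightarrow>
   a11 = b11 \<and> a12 = b12 \<and> a13 = b13 \<and> a21 = b21 \<and> a22 = b22 \<and> a23 = b23 \<and>
   a31 = b31 \<and> a32 = b32 \<and> a33 = b33"
  unfolding vec_eq_iff forall_3 by simp

lemma mat3_mult:
  "(mat3 a11 a12 a13 a21 a22 a23 a31 a32 a33 :: 'a::semiring_1^3^3) ** mat3 b11 b12 b13 b21 b22 b23 b31 b32 b33 =
   mat3 (a11*b11+a12*b21+a13*b31) (a11*b12+a12*b22+a13*b32) (a11*b13+a12*b23+a13*b33)
        (a21*b11+a22*b21+a23*b31) (a21*b12+a22*b22+a23*b32) (a21*b13+a22*b23+a23*b33)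
        (a31*b11+a32*b21+a33*b31) (a31*b12+a32*b22+a33*b32) (a31*b13+a32*b23+a33*b33)"
  unfolding vec_eq_iff forall_3 matrix_matrix_mult_def by (simp add: sum_3)

lemma mat3_add:
  "(mat3 a11 a12 a13 a21 a22 a23 a31 a32 a33 :: 'a::plus^3^3) + mat3 b11 b12 b13 b21 b22 b23 b31 b32 b33 =
   mat3 (a11+b11) (a12+b12) (a13+b13) (a21+b21) (a22+b22) (a23+b23) (a31+b31) (a32+b32) (a33+b33)"
  unfolding vec_eq_iff forall_3 by simp

lemma mat3_diff:
  "(mat3 a11 a12 a13 a21 a22 a23 a31 a32 a33 :: 'a::minus^3^3) - mat3 b11 b12 b13 b21 b22 b23 b31 b32 b33 =
   mat3 (a11-b11) (a12-b12) (a13-b13) (a21-b21) (a22-b22) (a23-b23) (a31-b31) (a32-b32) (a33-b33)"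
  unfolding vec_eq_iff forall_3 by simp

lemma mat3_zero: "(0::'a::zero^3^3) = mat3 0 0 0 0 0 0 0 0 0"
  unfolding vec_eq_iff forall_3 by simp

lemma mat3_mat: "(mat c::'a::zero^3^3) = mat3 c 0 0 0 c 0 0 0 c"
  unfolding vec_eq_iff forall_3 by (simp add: mat_def)

lemma matrix_add_rdistrib: "(A + B) ** C = A ** C + B ** (C::'a::semiring_1^_^_)"
  by (simp add: vec_eq_iff matrix_matrix_mult_def sum.distrib distrib_right)

lemma matrix_diff_ldistrib: "A ** (B - C) = A ** B - A ** (C::'a::ring_1^_^_)"
  by (simp add: vec_eq_iff matrix_matrix_mult_def sum_subtractf right_diff_distrib)

lemma matrix_diff_rdistrib: "(A - B) ** C = A ** C - B ** (C::'a::ring_1^_^_)"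
  by (simp add: vec_eq_iff matrix_matrix_mult_def sum_subtractf left_diff_distrib)

lemma matrix_minus_left: "(- A) ** B = - (A ** (B::'a::ring_1^_^_))"
  by (simp add: vec_eq_iff matrix_matrix_mult_def sum_negf)

lemma matrix_minus_right: "A ** (- B) = - (A ** (B::'a::ring_1^_^_))"
  by (simp add: vec_eq_iff matrix_matrix_mult_def sum_negf)

lemma matrix_sum_ldistrib: "A ** (\<Sum>k\<in>K. B k) = (\<Sum>k\<in>K. A ** (B k::'a::semiring_1^_^_))"
  by (induction K rule: infinite_finite_induct) (simp_all add: matrix_add_ldistrib)

lemma matrix_sum_rdistrib: "(\<Sum>k\<in>K. A k) ** B = (\<Sum>k\<in>K. A k ** (B::'a::semiring_1^_^_))"
  by (induction K rule: infinite_finite_induct) (simp_all add: matrix_add_rdistrib)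

lemma mat_mult_nth: "(mat c ** A) $ i $ j = c * (A $ i $ j :: 'a::semiring_1)"
  by (simp add: matrix_matrix_mult_def mat_def if_distrib if_distribR cong: if_cong)

lemma mult_mat_nth: "(A ** mat c) $ i $ j = (A $ i $ j :: 'a::semiring_1) * c"
  by (simp add: matrix_matrix_mult_def mat_def if_distrib if_distribR cong: if_cong)

lemma mat_mult_commute: "A ** mat c = mat c ** (A::'a::comm_semiring_1^'n^'n)"
  by (simp add: vec_eq_iff mat_mult_nth mult_mat_nth mult.commute)

lemma mat_mult_left_commute:
  fixes A B :: "'a::comm_semiring_1^'n^'n"
  shows "A ** (mat c ** B) = mat c ** (A ** B)"
  by (metis matrix_mul_assoc mat_mult_commute)

lemma mat_mult_mat: "mat a ** (mat b ** B) = mat (a * b) ** (B::'a::semiring_1^_^_)"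
  by (simp add: vec_eq_iff mat_mult_nth mult.assoc)

lemma mat_add: "mat a + mat b = (mat (a + b) :: 'a::monoid_add^'n^'n)"
  by (simp add: vec_eq_iff mat_def)

lemma mat_mult_cancel:
  assumes "mat c ** A = mat c ** B" "c \<noteq> 0"
  shows "A = (B::'a::idom^_^_)"
  using assms by (simp add: vec_eq_iff mat_mult_nth)

lemma mat_nth [simp]: "mat c $ i $ j = (if i = j then c else 0)"
  by (simp add: mat_def)

(* toeplitz3 a b c = a + b S + c S^2. *)
definition toeplitz3 :: "'a::zero \<Rightarrow> 'a \<Rightarrow> 'a \<Rightarrow> 'a^3^3" where
  "toeplitz3 a b c = mat3 a b c 0 a b 0 0 a"

lemma toeplitz3_zero: "toeplitz3 0 0 0 = 0"
  by (simp add: toeplitz3_def mat3_zero)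

definition Sm :: "'a::{zero,one}^3^3" where
  "Sm = toeplitz3 0 1 0"

lemma toeplitz3_mult:
  "toeplitz3 a b c ** toeplitz3 a' b' c' =
   toeplitz3 (a * a') (a * b' + b * a') (a * c' + b * b' + c * (a'::'a::comm_semiring_1))"
  by (simp add: toeplitz3_def mat3_mult algebra_simps)

lemma toeplitz3_commute: "toeplitz3 a b c ** toeplitz3 a' b' c' = toeplitz3 a' b' c' ** toeplitz3 a b (c::'a::comm_semiring_1)"
  by (simp add: toeplitz3_mult algebra_simps)

lemma mat_eq_toeplitz3: "mat c = toeplitz3 c 0 0"
  by (simp add: toeplitz3_def mat3_mat)

lemma commute_Sm_imp_toeplitz3:
  fixes D :: "'a::semiring_1^3^3"
  assumes "D ** Sm = Sm ** D"
  shows "D = toeplitz3 (D$1$1) (D$1$2) (D$1$3)"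
proof -
  have "D$2$1 = 0 \<and> D$3$1 = 0 \<and> D$3$2 = 0 \<and> D$2$2 = D$1$1 \<and> D$3$3 = D$1$1 \<and> D$2$3 = D$1$2"
    using assms by (subst (asm) (1 2) mat3_eta[of D]) (simp add: Sm_def toeplitz3_def mat3_mult mat3_eq_iff)
  then show ?thesis
    by (subst mat3_eta[of D]) (simp add: toeplitz3_def)
qed

lemma mpoly_eval_nth [simp]: "mpoly_eval A x $ i $ j = poly (A $ i $ j) x"
  by (simp add: mpoly_eval_def)

lemma mpoly_eval_add: "mpoly_eval (A + B) x = mpoly_eval A x + mpoly_eval B x"
  by (simp add: vec_eq_iff)

lemma mpoly_eval_diff: "mpoly_eval (A - B) x = mpoly_eval A x - mpoly_eval B x"
  by (simp add: vec_eq_iff)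

lemma mpoly_eval_uminus: "mpoly_eval (- A) x = - mpoly_eval A x"
  by (simp add: vec_eq_iff)

lemma mpoly_eval_mult: "mpoly_eval (A ** B) x = mpoly_eval A x ** mpoly_eval B x"
  by (simp add: vec_eq_iff matrix_matrix_mult_def poly_sum)

lemma mpoly_eval_mat: "mpoly_eval (mat p) x = mat (poly p x)"
  by (simp add: vec_eq_iff mat_def)

lemma mpoly_eval_toeplitz3:
  "mpoly_eval (toeplitz3 a b c) x = toeplitz3 (poly a x) (poly b x) (poly c x)"
  unfolding vec_eq_iff forall_3 by (simp add: toeplitz3_def)

lemma poly_eq_if_eq_nonzero:
  fixes p q :: "'a::{idom,ring_char_0} poly"
  assumes "\<And>x. x \<noteq> 0 \<Longrightarrow> poly p x = poly q x"
  shows "p = q"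
proof (rule ccontr)
  assume "p \<noteq> q"
  then have "finite {x. poly (p - q) x = 0}"
    by (intro poly_roots_finite) simp
  moreover have "UNIV - {0} \<subseteq> {x. poly (p - q) x = 0}"
    using assms by auto
  ultimately have "finite (UNIV :: 'a set)"
    by (metis finite_Diff2 finite.emptyI finite_insert finite_subset)
  then show False
    using infinite_UNIV_char_0 by blast
qed

lemma mpoly_eqI:
  assumes "\<And>x. x \<noteq> 0 \<Longrightarrow> mpoly_eval A x = mpoly_eval B x"
  shows "A = B"
proof -
  have "A $ i $ j = B $ i $ j" for i j
    using assms by (intro poly_eq_if_eq_nonzero) (metis mpoly_eval_nth)
  then show ?thesis
    by (simp add: vec_eq_iff)
qed

definition mpderiv :: "'a::{comm_semiring_1,semiring_no_zero_divisors} poly^'n^'m \<Rightarrow> 'a poly^'n^'m" where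
  "mpderiv M = (\<chi> i j. pderiv (M $ i $ j))"

lemma mpderiv_nth [simp]: "mpderiv M $ i $ j = pderiv (M $ i $ j)"
  by (simp add: mpderiv_def)

lemma mpderiv_add: "mpderiv (A + B) = mpderiv A + mpderiv B"
  by (simp add: vec_eq_iff pderiv_add)

lemma pderiv_sum: "pderiv (sum f A) = (\<Sum>x\<in>A. pderiv (f x))"
  using higher_pderiv_sum[of 1] by simp

lemma mpderiv_mult: "mpderiv (A ** B) = mpderiv A ** B + A ** mpderiv (B::'a::{comm_semiring_1,semiring_no_zero_divisors} poly^_^_)"
  by (simp add: vec_eq_iff matrix_matrix_mult_def pderiv_sum pderiv_mult sum.distrib algebra_simps)

definition coeff_mat :: "'a::zero poly^'n^'m \<Rightarrow> nat \<Rightarrow> 'a^'n^'m" where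
  "coeff_mat M k = (\<chi> i j. coeff (M $ i $ j) k)"

definition mconst :: "'a::zero^'n^'m \<Rightarrow> 'a poly^'n^'m" where
  "mconst M = (\<chi> i j. [:M $ i $ j:])"

lemma mpoly_eval_mconst: "mpoly_eval (mconst M) x = M"
  by (simp add: mconst_def vec_eq_iff)

lemma exists_degree_bound: "\<exists>d. \<forall>i j. degree (M $ i $ j) \<le> d"
proof (intro exI allI)
  fix i j
  have "degree (M $ i $ j) \<le> (\<Sum>j\<in>UNIV. degree (M $ i $ j))"
    by (rule member_le_sum) auto
  also have "\<dots> \<le> (\<Sum>i\<in>UNIV. \<Sum>j\<in>UNIV. degree (M $ i $ j))"
    by (rule member_le_sum[where f = "\<lambda>i. \<Sum>j\<in>UNIV. degree (M $ i $ j)"]) auto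
  finally show "degree (M $ i $ j) \<le> (\<Sum>i\<in>UNIV. \<Sum>j\<in>UNIV. degree (M $ i $ j))" .
qed

lemma degree_matrix_mult_le:
  assumes "\<And>i j. degree (A $ i $ j) \<le> a" "\<And>i j. degree (B $ i $ j) \<le> b"
  shows "degree ((A ** B) $ i $ j) \<le> a + b"
  unfolding matrix_matrix_mult_def
  by (simp, intro degree_sum_le) (auto intro!: order.trans[OF degree_mult_le] add_mono assms)

lemma poly_cutoff_plus_poly_shift: "poly_cutoff n p + monom 1 n * poly_shift n p = (p::'a::comm_semiring_1 poly)"
  by (rule poly_eqI) (auto simp: coeff_poly_cutoff coeff_monom_mult coeff_poly_shift)

lemma poly_cutoff_eq_sum_monom: "poly_cutoff n p = (\<Sum>k<n. monom (coeff p k) k)"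
  by (rule poly_eqI) (simp add: coeff_poly_cutoff coeff_sum)

lemma laurent_principal_part_zero:
  fixes p :: "complex poly"
  assumes "\<And>x. x \<noteq> 0 \<Longrightarrow> poly p x = a / x + b / x^2 + c / x^3"
  shows "a = 0 \<and> b = 0 \<and> c = 0"
proof -
  have "monom 1 3 * p = [:c, b, a:]"
    using assms by (intro poly_eq_if_eq_nonzero) (simp add: poly_monom field_simps power2_eq_square power3_eq_cube)
  then have "coeff (monom 1 3 * p) k = coeff [:c, b, a:] k" for k
    by simp
  from this[of 0] this[of 1] this[of 2] show ?thesis
    by (simp add: coeff_monom_mult numeral_2_eq_2)
qed

section \<open>The matrix T = x + S, its inverse and its adjugate\<close>

definition Tinv :: "complex \<Rightarrow> complex^3^3" where
  "Tinv x = toeplitz3 (1 / x) (- 1 / x^2) (1 / x^3)"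

lemma toeplitz3_Tinv: "x \<noteq> 0 \<Longrightarrow> toeplitz3 x 1 0 ** Tinv x = mat 1"
  by (simp add: Tinv_def toeplitz3_mult mat_eq_toeplitz3 field_simps power2_eq_square power3_eq_cube)

lemma Tinv_toeplitz3: "x \<noteq> 0 \<Longrightarrow> Tinv x ** toeplitz3 x 1 0 = mat 1"
  by (metis Tinv_def toeplitz3_Tinv toeplitz3_commute)

lemma Tinv_commute_toeplitz3: "Tinv x ** toeplitz3 a b c = toeplitz3 a b c ** Tinv x"
  unfolding Tinv_def by (rule toeplitz3_commute)

lemma Tinv_mult_expand:
  "Tinv x ** R = mat (1 / x) ** R - mat (1 / x^2) ** (Sm ** R) + mat (1 / x^3) ** (Sm ** (Sm ** R))"
  unfolding vec_eq_iff forall_3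
  by (simp add: matrix_matrix_mult_def sum_3 Tinv_def Sm_def toeplitz3_def field_simps)

lemma Tinv_laurent_expansion:
  fixes b0 b1 b2 :: "complex^3^3"
  assumes x: "x \<noteq> 0"
  defines "D \<equiv> b0 - Sm ** b1 + Sm ** Sm ** b2"
  shows "(Tinv x ** (b0 + mat x ** b1 + mat (x^2) ** b2) - (b1 + mat (2 * x) ** b2)) ** toeplitz3 x 1 0 =
    D + Tinv x ** (D ** Sm - Sm ** D) - toeplitz3 x 1 0 ** b2 ** toeplitz3 x 1 0"
  unfolding D_def vec_eq_iff forall_3
  using x by (simp add: matrix_matrix_mult_def sum_3 Tinv_def Sm_def toeplitz3_def
      field_simps power2_eq_square power3_eq_cube)

definition Tmat :: "complex poly^3^3" where
  "Tmat = toeplitz3 [:0, 1:] 1 0"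

lemma mpoly_eval_Tmat: "mpoly_eval Tmat x = toeplitz3 x 1 0"
  by (simp add: Tmat_def mpoly_eval_toeplitz3)

lemma mpderiv_Tmat: "mpderiv Tmat = mat 1"
  unfolding vec_eq_iff forall_3 by (simp add: Tmat_def toeplitz3_def pderiv_pCons)

lemma degree_Tmat: "degree (Tmat $ i $ j) \<le> 1"
  using exhaust_3[of i] exhaust_3[of j] by (auto simp: Tmat_def toeplitz3_def)

definition Tadj :: "complex poly^3^3" where
  "Tadj = toeplitz3 [:0, 0, 1:] [:0, -1:] 1"

lemma Tmat_Tadj: "Tmat ** Tadj = mat (monom 1 3)"
  by (simp add: Tmat_def Tadj_def toeplitz3_mult mat_eq_toeplitz3 monom_Suc monom_0 numeral_3_eq_3)

lemma Tadj_Tmat: "Tadj ** Tmat = mat (monom 1 3)"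
  by (metis Tadj_def Tmat_def Tmat_Tadj toeplitz3_commute)

lemma Tmat_sandwich: "Tmat ** (Tadj ** A ** Tadj) ** Tmat = mat (monom 1 6) ** A"
proof -
  have "Tmat ** (Tadj ** A ** Tadj) ** Tmat = (Tmat ** Tadj) ** A ** (Tadj ** Tmat)"
    by (simp add: matrix_mul_assoc)
  also have "\<dots> = mat (monom 1 3 * monom 1 3) ** A"
    by (simp add: Tmat_Tadj Tadj_Tmat mat_mult_commute mat_mult_mat flip: matrix_mul_assoc)
  finally show ?thesis
    by (simp add: mult_monom)
qed

lemma Tadj_sandwich: "Tadj ** (Tmat ** A ** Tmat) ** Tadj = mat (monom 1 6) ** A"
proof -
  have "Tadj ** (Tmat ** A ** Tmat) ** Tadj = (Tadj ** Tmat) ** A ** (Tmat ** Tadj)"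
    by (simp add: matrix_mul_assoc)
  also have "\<dots> = mat (monom 1 3 * monom 1 3) ** A"
    by (simp add: Tmat_Tadj Tadj_Tmat mat_mult_commute mat_mult_mat flip: matrix_mul_assoc)
  finally show ?thesis
    by (simp add: mult_monom)
qed

section \<open>Reduction of the eigenvalue equation\<close>

lemma psi_eq: "psi x w = mat (exp (x * w)) ** (mat w - Tinv x)"
  unfolding vec_eq_iff forall_3
  by (simp add: psi_def Smat_def Tinv_def toeplitz3_def mat_mult_nth mat3_mult
      field_simps power2_eq_square power3_eq_cube)

lemma higher_deriv_exp_affine:
  fixes x d c :: complex
  shows "(deriv ^^ j) (\<lambda>w. exp (x * w) * (w * d + c)) =
         (\<lambda>w. exp (x * w) * (x^j * (w * d + c) + of_nat j * x^(j - 1) * d))"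
proof (induction j)
  case 0
  then show ?case by simp
next
  case (Suc j)
  have "((\<lambda>w. exp (x * w) * (x^j * (w * d + c) + of_nat j * x^(j - 1) * d)) has_field_derivative
        exp (x * w) * (x^Suc j * (w * d + c) + of_nat (Suc j) * x^(Suc j - 1) * d)) (at w)" for w
  proof -
    have "((\<lambda>w. exp (x * w) * (x^j * (w * d + c) + of_nat j * x^(j - 1) * d)) has_field_derivative
        (exp (x * w) * x) * (x^j * (w * d + c) + of_nat j * x^(j - 1) * d) + exp (x * w) * (x^j * d)) (at w)"
      by (auto intro!: derivative_eq_intros)
    moreover have "(exp (x * w) * x) * (x^j * (w * d + c) + of_nat j * x^(j - 1) * d) + exp (x * w) * (x^j * d)
        = exp (x * w) * (x^Suc j * (w * d + c) + of_nat (Suc j) * x^(Suc j - 1) * d)"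
      by (cases j) (simp_all add: algebra_simps)
    ultimately show ?thesis
      by simp
  qed
  then have "deriv (\<lambda>w. exp (x * w) * (x^j * (w * d + c) + of_nat j * x^(j - 1) * d)) =
      (\<lambda>w. exp (x * w) * (x^Suc j * (w * d + c) + of_nat (Suc j) * x^(Suc j - 1) * d))"
    using DERIV_imp_deriv by blast
  then show ?case
    using Suc.IH by simp
qed

lemma dpsi_eq:
  "dpsi j x z = mat (exp (x * z)) ** (mat (x^j) ** (mat z - Tinv x) + mat (of_nat j * x^(j - 1)))"
proof -
  have entry: "(\<lambda>w. psi x w $ a $ b) = (\<lambda>w. exp (x * w) * (w * mat 1 $ a $ b + - Tinv x $ a $ b))"
    for a b by (simp add: psi_eq mat_mult_nth algebra_simps fun_eq_iff)
  show ?thesis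
    unfolding dpsi_def entry higher_deriv_exp_affine
    by (simp add: vec_eq_iff mat_mult_nth algebra_simps)
qed

lemma sum_power_coeff_eq_poly:
  fixes p :: "'a::comm_semiring_1 poly"
  assumes "degree p \<le> m"
  shows "(\<Sum>j\<le>m. x^j * coeff p j) = poly p x"
proof -
  have "(\<Sum>j\<le>m. x^j * coeff p j) = (\<Sum>j\<le>degree p. x^j * coeff p j)"
    using assms by (intro sum.mono_neutral_right) (auto simp: coeff_eq_0)
  then show ?thesis by (simp add: poly_altdef mult.commute)
qed

lemma sum_power_coeff_eq_poly_pderiv:
  fixes p :: "'a::{idom,semiring_char_0} poly"
  assumes "degree p \<le> m"
  shows "(\<Sum>j\<le>m. of_nat j * x^(j - 1) * coeff p j) = poly (pderiv p) x"
proof -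
  have "degree (pderiv p) \<le> m"
    using assms degree_pderiv[of p] by linarith
  then have "poly (pderiv p) x = (\<Sum>j\<le>m. x^j * (of_nat (Suc j) * coeff p (Suc j)))"
    by (simp add: sum_power_coeff_eq_poly[symmetric] coeff_pderiv)
  also have "\<dots> = (\<Sum>j<Suc (Suc m). of_nat j * x^(j - 1) * coeff p j)"
    by (subst sum.lessThan_Suc_shift) (simp add: lessThan_Suc_atMost algebra_simps)
  also have "\<dots> = (\<Sum>j\<le>m. of_nat j * x^(j - 1) * coeff p j)"
    using assms by (simp add: lessThan_Suc_atMost coeff_eq_0)
  finally show ?thesis by simp
qed

lemma sum_mat_coeff_mat:
  assumes "\<And>i j. degree (\<beta> $ i $ j) \<le> m"
  shows "(\<Sum>j\<le>m. mat (x^j) ** coeff_mat \<beta> j) = mpoly_eval \<beta> x"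
  using assms by (simp add: vec_eq_iff mat_mult_nth coeff_mat_def sum_power_coeff_eq_poly)

lemma sum_mat_coeff_mat_pderiv:
  assumes "\<And>i j. degree (\<beta> $ i $ j) \<le> m"
  shows "(\<Sum>j\<le>m. mat (of_nat j * x^(j - 1)) ** coeff_mat \<beta> j) = mpoly_eval (mpderiv \<beta>) x"
proof -
  have "(\<Sum>j\<le>m. of_nat j * x^(j - 1) * coeff (\<beta> $ i $ k) j) = poly (pderiv (\<beta> $ i $ k)) x" for i k
    by (rule sum_power_coeff_eq_poly_pderiv[OF assms])
  then show ?thesis
    by (simp add: vec_eq_iff mat_mult_nth coeff_mat_def)
qed

lemma sum_dpsi_coeff_mat:
  assumes "\<And>i j. degree (\<beta> $ i $ j) \<le> m"
  shows "(\<Sum>j\<le>m. dpsi j x z ** coeff_mat \<beta> j) =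
    mat (exp (x * z)) ** ((mat z - Tinv x) ** mpoly_eval \<beta> x + mpoly_eval (mpderiv \<beta>) x)"
proof -
  have "dpsi j x z ** coeff_mat \<beta> j = mat (exp (x * z)) **
      ((mat z - Tinv x) ** (mat (x^j) ** coeff_mat \<beta> j) + mat (of_nat j * x^(j - 1)) ** coeff_mat \<beta> j)"
    for j by (simp only: dpsi_eq matrix_add_rdistrib mat_mult_left_commute[of "mat z - Tinv x"]
        flip: matrix_mul_assoc)
  then have "(\<Sum>j\<le>m. dpsi j x z ** coeff_mat \<beta> j) = mat (exp (x * z)) **
      ((mat z - Tinv x) ** (\<Sum>j\<le>m. mat (x^j) ** coeff_mat \<beta> j) +
       (\<Sum>j\<le>m. mat (of_nat j * x^(j - 1)) ** coeff_mat \<beta> j))"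
    by (simp add: sum.distrib flip: matrix_sum_ldistrib)
  then show ?thesis
    unfolding sum_mat_coeff_mat[OF assms] sum_mat_coeff_mat_pderiv[OF assms] .
qed

(* psi B = theta psi with the factor e^(xz) cancelled, where beta(x) = sum_j x^j b_j(z). *)
definition psi_eqn :: "complex \<Rightarrow> complex poly^3^3 \<Rightarrow> complex poly^3^3 \<Rightarrow> bool" where
  "psi_eqn z \<beta> \<theta> \<longleftrightarrow> (\<forall>x. x \<noteq> 0 \<longrightarrow>
     (mat z - Tinv x) ** mpoly_eval \<beta> x + mpoly_eval (mpderiv \<beta>) x = mpoly_eval \<theta> x ** (mat z - Tinv x))"

lemma A_set_imp_psi_eqn:
  assumes "\<theta> \<in> A_set"
  shows "\<exists>m. \<forall>z. \<exists>\<beta>. (\<forall>i j. degree (\<beta> $ i $ j) \<le> m) \<and> psi_eqn z \<beta> \<theta>"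
proof -
  obtain b m where bm: "\<And>x z. x \<noteq> 0 \<Longrightarrow> (\<Sum>j\<le>m. dpsi j x z ** b j z) = mpoly_eval \<theta> x ** psi x z"
    using assms unfolding A_set_def by blast
  have "\<exists>\<beta>. (\<forall>i j. degree (\<beta> $ i $ j) \<le> m) \<and> psi_eqn z \<beta> \<theta>" for z
  proof (intro exI conjI allI)
    define \<beta> where "\<beta> = (\<chi> i j. \<Sum>k\<le>m. monom (b k z $ i $ j) k)"
    show deg: "degree (\<beta> $ i $ j) \<le> m" for i j
      unfolding \<beta>_def by (auto intro!: degree_sum_le order.trans[OF degree_monom_le])
    have coeff: "coeff_mat \<beta> k = b k z" if "k \<le> m" for k
      using that by (simp add: coeff_mat_def \<beta>_def vec_eq_iff coeff_sum)
    show "psi_eqn z \<beta> \<theta>"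
      unfolding psi_eqn_def
    proof (intro allI impI)
      fix x :: complex
      assume x: "x \<noteq> 0"
      have "mat (exp (x * z)) ** ((mat z - Tinv x) ** mpoly_eval \<beta> x + mpoly_eval (mpderiv \<beta>) x) =
          (\<Sum>j\<le>m. dpsi j x z ** coeff_mat \<beta> j)"
        by (rule sum_dpsi_coeff_mat[OF deg, symmetric])
      also have "\<dots> = (\<Sum>j\<le>m. dpsi j x z ** b j z)"
        using coeff by (intro sum.cong) auto
      also have "\<dots> = mat (exp (x * z)) ** (mpoly_eval \<theta> x ** (mat z - Tinv x))"
        by (simp only: bm[OF x] psi_eq mat_mult_left_commute)
      finally show "(mat z - Tinv x) ** mpoly_eval \<beta> x + mpoly_eval (mpderiv \<beta>) x =
          mpoly_eval \<theta> x ** (mat z - Tinv x)"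
        by (rule mat_mult_cancel) simp
    qed
  qed
  then show ?thesis
    by blast
qed

lemma psi_eqn_imp_A_set:
  assumes "\<And>z. (\<forall>i j. degree (B z $ i $ j) \<le> m) \<and> psi_eqn z (B z) \<theta>"
  shows "\<theta> \<in> A_set"
proof -
  have "\<forall>x z. x \<noteq> 0 \<longrightarrow> (\<Sum>j\<le>m. dpsi j x z ** coeff_mat (B z) j) = mpoly_eval \<theta> x ** psi x z"
  proof (intro allI impI)
    fix x z :: complex
    assume x: "x \<noteq> 0"
    have eqn: "(mat z - Tinv x) ** mpoly_eval (B z) x + mpoly_eval (mpderiv (B z)) x =
        mpoly_eval \<theta> x ** (mat z - Tinv x)"
      using assms[of z] x unfolding psi_eqn_def by blast
    have "(\<Sum>j\<le>m. dpsi j x z ** coeff_mat (B z) j) =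
        mat (exp (x * z)) ** ((mat z - Tinv x) ** mpoly_eval (B z) x + mpoly_eval (mpderiv (B z)) x)"
      using assms by (intro sum_dpsi_coeff_mat) blast
    also have "\<dots> = mat (exp (x * z)) ** (mpoly_eval \<theta> x ** (mat z - Tinv x))"
      by (simp only: eqn)
    also have "\<dots> = mpoly_eval \<theta> x ** psi x z"
      by (simp only: psi_eq mat_mult_left_commute)
    finally show "(\<Sum>j\<le>m. dpsi j x z ** coeff_mat (B z) j) = mpoly_eval \<theta> x ** psi x z" .
  qed
  then show ?thesis
    unfolding A_set_def by (intro CollectI exI[of _ "\<lambda>j z. coeff_mat (B z) j"] exI[of _ m])
qed

lemma A_set_iff:
  "\<theta> \<in> A_set \<longleftrightarrow> (\<exists>m. \<forall>z. \<exists>\<beta>. (\<forall>i j. degree (\<beta> $ i $ j) \<le> m) \<and> psi_eqn z \<beta> \<theta>)"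
proof
  assume "\<exists>m. \<forall>z. \<exists>\<beta>. (\<forall>i j. degree (\<beta> $ i $ j) \<le> m) \<and> psi_eqn z \<beta> \<theta>"
  then obtain m B where "\<And>z. (\<forall>i j. degree (B z $ i $ j) \<le> m) \<and> psi_eqn z (B z) \<theta>"
    by metis
  then show "\<theta> \<in> A_set"
    by (rule psi_eqn_imp_A_set)
qed (rule A_set_imp_psi_eqn)

section \<open>The algebra A as a set of matrix polynomials\<close>

definition W_set :: "(complex poly^3^3) set" where
  "W_set = {toeplitz3 [:c0:] [:c1:] [:c2:] + Tmat ** Q ** Tmat | c0 c1 c2 Q. True}"

lemma mpderiv_toeplitz3_const: "mpderiv (toeplitz3 [:a:] [:b:] [:c:]) = 0"
  unfolding vec_eq_iff forall_3 by (simp add: toeplitz3_def pderiv_pCons)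

lemma degree_toeplitz3_const: "degree (toeplitz3 [:a:] [:b:] [:c:] $ i $ j) = 0"
  using exhaust_3[of i] exhaust_3[of j] by (auto simp: toeplitz3_def)

lemma exists_antiderivative:
  fixes q :: "'a::field_char_0 poly"
  shows "\<exists>g. pderiv g = q \<and> degree g \<le> degree q + 1"
proof (intro exI conjI)
  define g where "g = (\<Sum>k\<le>degree q. monom (coeff q k / of_nat (Suc k)) (Suc k))"
  have "pderiv g = (\<Sum>k\<le>degree q. monom (coeff q k) k)"
    unfolding g_def by (simp add: pderiv_sum pderiv_monom del: of_nat_Suc)
  then show "pderiv g = q"
    by (simp add: poly_as_sum_of_monoms)
  show "degree g \<le> degree q + 1"
    unfolding g_def by (intro degree_sum_le) (auto intro: order.trans[OF degree_monom_le])
qed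

lemma exists_smult_plus_pderiv_eq_nonzero:
  fixes z :: "'a::field_char_0"
  assumes "z \<noteq> 0"
  shows "\<exists>g. smult z g + pderiv g = h \<and> degree g \<le> degree h"
proof (induction "degree h" arbitrary: h rule: less_induct)
  case less
  show ?case
  proof (cases "degree h = 0")
    case True
    then have "pderiv h = 0"
      by (simp add: pderiv_eq_0_iff)
    then show ?thesis
      using assms by (intro exI[of _ "smult (1 / z) h"]) (simp add: pderiv_smult)
  next
    case False
    then obtain g1 where g1: "smult z g1 + pderiv g1 = pderiv h" "degree g1 \<le> degree (pderiv h)"
      using less degree_pderiv[of h] by (metis diff_less zero_less_one neq0_conv)
    define g where "g = smult (1 / z) (h - g1)"
    have "pderiv g = smult (1 / z) (pderiv h - pderiv g1)"
      by (simp add: g_def pderiv_smult pderiv_diff)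
    also have "pderiv h - pderiv g1 = smult z g1"
      using g1(1) by (simp add: algebra_simps)
    finally have "smult z g + pderiv g = h"
      using assms by (simp add: g_def smult_diff_right)
    moreover have "degree g \<le> degree h"
      unfolding g_def using g1(2) degree_pderiv[of h]
      by (intro order.trans[OF degree_smult_le] degree_diff_le) auto
    ultimately show ?thesis by blast
  qed
qed

lemma exists_smult_plus_pderiv_eq:
  fixes z :: "'a::field_char_0"
  shows "\<exists>g. smult z g + pderiv g = h \<and> degree g \<le> degree h + 1"
proof (cases "z = 0")
  case True
  then show ?thesis using exists_antiderivative[of h] by simp
next
  case False
  then show ?thesis using exists_smult_plus_pderiv_eq_nonzero[of z h] by fastforce
qed

lemma exists_mat_plus_mpderiv_eq:
  assumes "\<And>i j. degree (H $ i $ j) \<le> d"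
  shows "\<exists>G. (\<forall>i j. degree (G $ i $ j) \<le> d + 1) \<and> mat [:z:] ** G + mpderiv G = (H::complex poly^3^3)"
proof -
  have "\<forall>i j. \<exists>g. smult z g + pderiv g = H $ i $ j \<and> degree g \<le> degree (H $ i $ j) + 1"
    using exists_smult_plus_pderiv_eq by blast
  then obtain g where g: "\<And>i j. smult z (g i j) + pderiv (g i j) = H $ i $ j \<and> degree (g i j) \<le> degree (H $ i $ j) + 1"
    by metis
  show ?thesis
  proof (intro exI conjI allI)
    show "degree ((\<chi> i j. g i j) $ i $ j) \<le> d + 1" for i j
      using g[of i j] assms[of i j] by simp
    show "mat [:z:] ** (\<chi> i j. g i j) + mpderiv (\<chi> i j. g i j) = H"
      using g by (simp add: vec_eq_iff mat_mult_nth)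
  qed
qed

lemma psi_eqn_toeplitz3_plus_Tmat:
  assumes G: "mat [:z:] ** G + mpderiv G = mat [:z:] ** (Q ** Tmat) - Q"
  shows "psi_eqn z (toeplitz3 [:c0:] [:c1:] [:c2:] + Tmat ** G) (toeplitz3 [:c0:] [:c1:] [:c2:] + Tmat ** Q ** Tmat)"
  unfolding psi_eqn_def
proof (intro allI impI)
  fix x :: complex
  assume x: "x \<noteq> 0"
  define k t c g q where "k = Tinv x" and "t = toeplitz3 x 1 0" and "c = toeplitz3 c0 c1 c2"
    and "g = mpoly_eval G x" and "q = mpoly_eval Q x"
  have tk: "t ** k = mat 1" and ck: "c ** k = k ** c"
    using toeplitz3_Tinv[OF x] Tinv_commute_toeplitz3[of x c0 c1 c2] by (simp_all add: k_def t_def c_def)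
  have kt': "k ** (t ** X) = X" and tk': "t ** (k ** X) = X" and ck': "c ** (k ** X) = k ** (c ** X)" for X
    using Tinv_toeplitz3[OF x] tk ck by (simp_all add: k_def t_def matrix_mul_assoc)
  have g': "mpoly_eval (mpderiv G) x = mat z ** (q ** t) - q - mat z ** g"
    using arg_cong[OF G, of "\<lambda>M. mpoly_eval M x"]
    by (simp add: mpoly_eval_add mpoly_eval_diff mpoly_eval_mult mpoly_eval_mat mpoly_eval_Tmat
        q_def t_def g_def algebra_simps)
  show "(mat z - Tinv x) ** mpoly_eval (toeplitz3 [:c0:] [:c1:] [:c2:] + Tmat ** G) x +
      mpoly_eval (mpderiv (toeplitz3 [:c0:] [:c1:] [:c2:] + Tmat ** G)) x =
      mpoly_eval (toeplitz3 [:c0:] [:c1:] [:c2:] + Tmat ** Q ** Tmat) x ** (mat z - Tinv x)"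
    unfolding mpderiv_add mpderiv_mult mpderiv_Tmat mpderiv_toeplitz3_const
    by (simp add: mpoly_eval_add mpoly_eval_mult mpoly_eval_toeplitz3 mpoly_eval_Tmat g'
        flip: k_def t_def c_def g_def q_def)
      (simp add: matrix_add_ldistrib matrix_add_rdistrib matrix_diff_ldistrib matrix_diff_rdistrib
        mat_mult_left_commute mat_mult_commute[of _ z] tk ck kt' tk' ck' algebra_simps flip: matrix_mul_assoc)
qed

lemma W_set_subset_A_set: "W_set \<subseteq> A_set"
proof
  fix \<theta>
  assume "\<theta> \<in> W_set"
  then obtain c0 c1 c2 Q where \<theta>: "\<theta> = toeplitz3 [:c0:] [:c1:] [:c2:] + Tmat ** Q ** Tmat"
    unfolding W_set_def by blast
  obtain d where d: "\<And>i j. degree (Q $ i $ j) \<le> d"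
    using exists_degree_bound by blast
  have "\<exists>\<beta>. (\<forall>i j. degree (\<beta> $ i $ j) \<le> d + 3) \<and> psi_eqn z \<beta> \<theta>" for z
  proof -
    have "degree ((mat [:z:] ** (Q ** Tmat) - Q) $ i $ j) \<le> d + 1" for i j
    proof -
      have "degree (smult z ((Q ** Tmat) $ i $ j)) \<le> d + 1"
        using degree_matrix_mult_le[OF d degree_Tmat, of i j] degree_smult_le order.trans by blast
      then show ?thesis
        using d[of i j] by (simp add: mat_mult_nth degree_diff_le)
    qed
    then obtain G where G: "\<And>i j. degree (G $ i $ j) \<le> d + 1 + 1"
      "mat [:z:] ** G + mpderiv G = mat [:z:] ** (Q ** Tmat) - Q"
      using exists_mat_plus_mpderiv_eq by blast
    have "degree ((toeplitz3 [:c0:] [:c1:] [:c2:] + Tmat ** G) $ i $ j) \<le> d + 3" for i j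
      using degree_matrix_mult_le[OF degree_Tmat G(1), of i j] degree_toeplitz3_const[of c0 c1 c2 i j]
      by (simp add: degree_add_le)
    then show ?thesis
      using psi_eqn_toeplitz3_plus_Tmat[OF G(2)] \<theta> by blast
  qed
  then show "\<theta> \<in> A_set"
    unfolding A_set_iff by blast
qed

lemma psi_eqn_0_imp_eval:
  assumes "psi_eqn 0 \<beta> \<theta>" "x \<noteq> 0"
  shows "mpoly_eval \<theta> x = (Tinv x ** mpoly_eval \<beta> x - mpoly_eval (mpderiv \<beta>) x) ** toeplitz3 x 1 0"
proof -
  have "- (Tinv x ** mpoly_eval \<beta> x) + mpoly_eval (mpderiv \<beta>) x = - (mpoly_eval \<theta> x ** Tinv x)"
    using assms unfolding psi_eqn_def by (simp add: matrix_minus_left matrix_minus_right)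
  then have "mpoly_eval \<theta> x ** Tinv x = Tinv x ** mpoly_eval \<beta> x - mpoly_eval (mpderiv \<beta>) x"
    by (simp add: algebra_simps)
  then show ?thesis
    using Tinv_toeplitz3[OF assms(2)] by (metis matrix_mul_assoc matrix_mul_rid)
qed

lemma mpoly_split3:
  "\<beta> = (\<chi> i j. poly_cutoff 3 (\<beta> $ i $ j)) + Tmat ** (Tadj ** (\<chi> i j. poly_shift 3 (\<beta> $ i $ j)))"
  by (simp add: matrix_mul_assoc Tmat_Tadj vec_eq_iff mat_mult_nth poly_cutoff_plus_poly_shift)

lemma mpoly_eval_cutoff3:
  "mpoly_eval (\<chi> i j. poly_cutoff 3 (\<beta> $ i $ j)) x =
    coeff_mat \<beta> 0 + mat x ** coeff_mat \<beta> 1 + mat (x^2) ** coeff_mat \<beta> 2"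
  by (simp add: vec_eq_iff mat_mult_nth coeff_mat_def poly_cutoff_eq_sum_monom poly_sum poly_monom
      eval_nat_numeral algebra_simps)

lemma mpoly_eval_mpderiv_cutoff3:
  "mpoly_eval (mpderiv (\<chi> i j. poly_cutoff 3 (\<beta> $ i $ j))) x =
    coeff_mat \<beta> 1 + mat (2 * x) ** coeff_mat \<beta> 2"
  by (simp add: vec_eq_iff mat_mult_nth coeff_mat_def poly_cutoff_eq_sum_monom pderiv_add pderiv_monom
      poly_monom eval_nat_numeral algebra_simps)

lemma psi_eqn_0_laurent:
  fixes \<beta> \<theta> :: "complex poly^3^3"
  defines "b0 \<equiv> coeff_mat \<beta> 0" and "b1 \<equiv> coeff_mat \<beta> 1" and "b2 \<equiv> coeff_mat \<beta> 2"
  defines "Y \<equiv> Tadj ** (\<chi> i j. poly_shift 3 (\<beta> $ i $ j))"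
  defines "D \<equiv> b0 - Sm ** b1 + Sm ** Sm ** b2"
  assumes \<beta>: "psi_eqn 0 \<beta> \<theta>" and x: "x \<noteq> 0"
  shows "mpoly_eval \<theta> x = D + Tinv x ** (D ** Sm - Sm ** D) +
    toeplitz3 x 1 0 ** mpoly_eval (- (mconst b2 + mpderiv Y)) x ** toeplitz3 x 1 0"
proof -
  define t y y' where "t = toeplitz3 x 1 0" and "y = mpoly_eval Y x" and "y' = mpoly_eval (mpderiv Y) x"
  have split: "\<beta> = (\<chi> i j. poly_cutoff 3 (\<beta> $ i $ j)) + Tmat ** Y"
    unfolding Y_def by (rule mpoly_split3)
  have "mpoly_eval \<beta> x = b0 + mat x ** b1 + mat (x^2) ** b2 + t ** y"
    by (subst split) (simp add: mpoly_eval_add mpoly_eval_mult mpoly_eval_Tmat mpoly_eval_cutoff3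
        b0_def b1_def b2_def t_def y_def)
  moreover have "mpoly_eval (mpderiv \<beta>) x = b1 + mat (2 * x) ** b2 + y + t ** y'"
    by (subst split) (simp add: mpderiv_add mpderiv_mult mpderiv_Tmat mpoly_eval_add mpoly_eval_mult
        mpoly_eval_Tmat mpoly_eval_mpderiv_cutoff3 b1_def b2_def t_def y_def y'_def)
  moreover have "Tinv x ** (t ** y) = y"
    using Tinv_toeplitz3[OF x] by (simp add: t_def matrix_mul_assoc)
  ultimately have "Tinv x ** mpoly_eval \<beta> x - mpoly_eval (mpderiv \<beta>) x =
      (Tinv x ** (b0 + mat x ** b1 + mat (x^2) ** b2) - (b1 + mat (2 * x) ** b2)) - t ** y'"
    by (simp add: matrix_add_ldistrib)
  then have "mpoly_eval \<theta> x = D + Tinv x ** (D ** Sm - Sm ** D) - t ** b2 ** t - t ** y' ** t"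
    using psi_eqn_0_imp_eval[OF \<beta> x] Tinv_laurent_expansion[OF x, of b0 b1 b2]
    by (simp add: D_def t_def matrix_diff_rdistrib)
  moreover have "t ** mpoly_eval (- (mconst b2 + mpderiv Y)) x ** t = - (t ** b2 ** t) - t ** y' ** t"
    by (simp add: mpoly_eval_uminus mpoly_eval_diff mpoly_eval_mconst matrix_minus_left
        matrix_minus_right matrix_diff_ldistrib matrix_diff_rdistrib y'_def)
  ultimately show ?thesis
    by (simp add: t_def)
qed

lemma A_set_subset_W_set: "A_set \<subseteq> W_set"
proof
  fix \<theta>
  assume "\<theta> \<in> A_set"
  then obtain \<beta> where \<beta>: "psi_eqn 0 \<beta> \<theta>"
    unfolding A_set_iff by blast
  define D where "D = coeff_mat \<beta> 0 - Sm ** coeff_mat \<beta> 1 + Sm ** Sm ** coeff_mat \<beta> 2"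
  define R where "R = D ** Sm - Sm ** D"
  define Q where "Q = - (mconst (coeff_mat \<beta> 2) + mpderiv (Tadj ** (\<chi> i j. poly_shift 3 (\<beta> $ i $ j))))"
  have \<theta>_eval: "mpoly_eval \<theta> x = D + Tinv x ** R + toeplitz3 x 1 0 ** mpoly_eval Q x ** toeplitz3 x 1 0"
    if "x \<noteq> 0" for x
    using psi_eqn_0_laurent[OF \<beta> that] by (simp add: D_def R_def Q_def)
  have "R $ i $ j = 0" for i j
  proof -
    have "poly ((\<theta> - mconst D - Tmat ** Q ** Tmat) $ i $ j) x =
        R $ i $ j / x + - (Sm ** R) $ i $ j / x^2 + (Sm ** (Sm ** R)) $ i $ j / x^3" if "x \<noteq> 0" for x
      using \<theta>_eval[OF that]
      by (simp add: mpoly_eval_mult mpoly_eval_Tmat mpoly_eval_mconst Tinv_mult_expand mat_mult_nth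
          flip: mpoly_eval_nth)
    then show ?thesis
      using laurent_principal_part_zero by blast
  qed
  then have "D ** Sm = Sm ** D"
    by (simp add: R_def vec_eq_iff)
  then have "D = toeplitz3 (D $ 1 $ 1) (D $ 1 $ 2) (D $ 1 $ 3)"
    by (rule commute_Sm_imp_toeplitz3)
  moreover have "R = 0"
    using \<open>D ** Sm = Sm ** D\<close> by (simp add: R_def)
  ultimately have "\<theta> = toeplitz3 [:D $ 1 $ 1:] [:D $ 1 $ 2:] [:D $ 1 $ 3:] + Tmat ** Q ** Tmat"
    using \<theta>_eval by (intro mpoly_eqI) (simp add: mpoly_eval_add mpoly_eval_mult mpoly_eval_toeplitz3 mpoly_eval_Tmat)
  then show "\<theta> \<in> W_set"
    unfolding W_set_def by blast
qed

section \<open>The set Gamma\<close>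

definition gamma_params :: "complex poly^3^3 \<Rightarrow> nat \<Rightarrow> nat \<Rightarrow> nat \<Rightarrow> complex" where
  "gamma_params \<theta> k i j = coeff (\<theta> $ of_nat i $ of_nat j) k"

definition gamma_relations :: "complex poly^3^3 \<Rightarrow> bool" where
  "gamma_relations \<theta> \<longleftrightarrow> (\<forall>k<6. \<forall>i j. coeff (\<theta> $ i $ j) k = gcoef (gamma_params \<theta>) k $ i $ j)"

lemma less_6_cases: "k < (6::nat) \<Longrightarrow> k = 0 \<or> k = 1 \<or> k = 2 \<or> k = 3 \<or> k = 4 \<or> k = 5"
  by auto

lemma W_set_gamma_relations: "gamma_relations (toeplitz3 [:c0:] [:c1:] [:c2:] + Tmat ** Q ** Tmat)"
  unfolding gamma_relations_def forall_3
  by (intro allI impI, drule less_6_cases, elim disjE)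
    (simp_all add: gcoef_def gamma_params_def toeplitz3_def Tmat_def matrix_matrix_mult_def sum_3
      coeff_pCons eval_nat_numeral split: nat.split)

lemma coeff_gamma_poly: "k < 6 \<Longrightarrow> coeff (gamma_poly r p $ i $ j) k = gcoef r k $ i $ j"
  by (simp add: gamma_poly_def coeff_sum coeff_monom_mult)

lemma gcoef_gamma_params_gamma_poly:
  "k < 6 \<Longrightarrow> gcoef (gamma_params (gamma_poly r p)) k = gcoef r k"
  by (drule less_6_cases, elim disjE)
    (simp_all add: gamma_params_def coeff_gamma_poly gcoef_def)

lemma Gamma_set_iff: "\<theta> \<in> Gamma_set \<longleftrightarrow> gamma_relations \<theta>"
proof
  assume "\<theta> \<in> Gamma_set"
  then obtain r p where "\<theta> = gamma_poly r p"
    unfolding Gamma_set_def by blast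
  then show "gamma_relations \<theta>"
    by (simp add: gamma_relations_def coeff_gamma_poly gcoef_gamma_params_gamma_poly)
next
  assume rel: "gamma_relations \<theta>"
  have "\<theta> = gamma_poly (gamma_params \<theta>) (\<chi> i j. poly_shift 6 (\<theta> $ i $ j))"
  proof -
    have "\<theta> $ i $ j = (\<Sum>k<6. monom (gcoef (gamma_params \<theta>) k $ i $ j) k) + monom 1 6 * poly_shift 6 (\<theta> $ i $ j)"
      for i j
      using rel poly_cutoff_plus_poly_shift[of 6 "\<theta> $ i $ j"]
      by (simp add: gamma_relations_def poly_cutoff_eq_sum_monom)
    then show ?thesis
      by (simp add: gamma_poly_def vec_eq_iff)
  qed
  then show "\<theta> \<in> Gamma_set"
    unfolding Gamma_set_def by blast
qed

(* Dividing this matrix by x^6 gives the Q with theta = c(S) + T Q T. *)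
lemma gamma_poly_Tadj_low_coeffs:
  assumes "k < 6"
  shows "coeff ((Tadj ** (gamma_poly r p - toeplitz3 [:r 0 1 1:] [:r 0 1 2 - r 1 1 1:]
    [:r 0 1 3 - r 1 1 2 + r 2 1 1:]) ** Tadj) $ i $ j) k = 0"
  using less_6_cases[OF assms] exhaust_3[of i] exhaust_3[of j]
  by (elim disjE)
    (simp_all add: gamma_poly_def gcoef_def coeff_sum coeff_monom_mult toeplitz3_def Tadj_def
      matrix_matrix_mult_def sum_3 coeff_pCons eval_nat_numeral split: nat.split)

lemma Gamma_set_subset_W_set: "Gamma_set \<subseteq> W_set"
proof
  fix \<theta>
  assume "\<theta> \<in> Gamma_set"
  then obtain r p where \<theta>: "\<theta> = gamma_poly r p"
    unfolding Gamma_set_def by blast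
  define C where "C = toeplitz3 [:r 0 1 1:] [:r 0 1 2 - r 1 1 1:] [:r 0 1 3 - r 1 1 2 + r 2 1 1:]"
  define M where "M = Tadj ** (\<theta> - C) ** Tadj"
  define Q where "Q = (\<chi> i j. poly_shift 6 (M $ i $ j))"
  have "poly_cutoff 6 (M $ i $ j) = 0" for i j
    using gamma_poly_Tadj_low_coeffs by (simp add: poly_eq_iff coeff_poly_cutoff M_def C_def \<theta>)
  then have "M $ i $ j = monom 1 6 * Q $ i $ j" for i j
    using poly_cutoff_plus_poly_shift[of 6 "M $ i $ j"] by (simp add: Q_def)
  then have "M = mat (monom 1 6) ** Q"
    by (simp add: vec_eq_iff mat_mult_nth)
  then have "mat (monom 1 6) ** (Tmat ** Q ** Tmat) = mat (monom 1 6) ** (\<theta> - C)"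
    by (metis M_def Tmat_sandwich mat_mult_left_commute matrix_mul_assoc)
  then have "\<theta> = C + Tmat ** Q ** Tmat"
    by (auto dest: mat_mult_cancel)
  then show "\<theta> \<in> W_set"
    unfolding W_set_def C_def by blast
qed

lemma Gamma_set_eq_W_set: "Gamma_set = W_set"
proof
  show "W_set \<subseteq> Gamma_set"
    unfolding W_set_def using W_set_gamma_relations Gamma_set_iff by blast
qed (rule Gamma_set_subset_W_set)

section \<open>Noncommutative polynomials\<close>

definition nc_supp :: "ncpoly \<Rightarrow> gen list set" where
  "nc_supp f = {w. f w \<noteq> 0}"

lemma nc_fin_iff_finite_supp: "nc_fin f \<longleftrightarrow> finite (nc_supp f)"
  by (simp add: nc_fin_def nc_supp_def)

lemma nc_fin_zero: "nc_fin (\<lambda>w. 0)"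
  by (simp add: nc_fin_def)

lemma nc_fin_mon: "nc_fin (nc_mon u)"
  by (simp add: nc_fin_def nc_mon_def)

lemma nc_fin_add: "nc_fin f \<Longrightarrow> nc_fin g \<Longrightarrow> nc_fin (\<lambda>w. f w + g w)"
  unfolding nc_fin_def by (rule finite_subset[of _ "{w. f w \<noteq> 0} \<union> {w. g w \<noteq> 0}"]) auto

lemma nc_fin_scale: "nc_fin f \<Longrightarrow> nc_fin (\<lambda>w. c * f w)"
  unfolding nc_fin_def by (rule finite_subset[of _ "{w. f w \<noteq> 0}"]) auto

lemma nc_fin_diff: "nc_fin f \<Longrightarrow> nc_fin g \<Longrightarrow> nc_fin (\<lambda>w. f w - g w)"
  unfolding nc_fin_def by (rule finite_subset[of _ "{w. f w \<noteq> 0} \<union> {w. g w \<noteq> 0}"]) auto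

lemma nc_fin_sum: "(\<And>k. k \<in> K \<Longrightarrow> nc_fin (h k)) \<Longrightarrow> nc_fin (\<lambda>w. \<Sum>k\<in>K. h k w)"
  by (induction K rule: infinite_finite_induct) (simp_all add: nc_fin_zero nc_fin_add)

lemma nc_decomp: "nc_fin f \<Longrightarrow> f = (\<lambda>w. \<Sum>u\<in>nc_supp f. f u * nc_mon u w)"
  by (auto simp: fun_eq_iff nc_mon_def nc_supp_def nc_fin_iff_finite_supp if_distrib if_distribR
      cong: if_cong)

lemma nc_mult_mon: "nc_mult (nc_mon u) (nc_mon v) = nc_mon (u @ v)"
proof
  fix w
  have "take i w = u \<and> drop i w = v \<longleftrightarrow> w = u @ v \<and> i = length u" if "i \<le> length w" for i
    using that by (metis append_eq_conv_conj append_take_drop_id length_take min_absorb2)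
  then have "nc_mult (nc_mon u) (nc_mon v) w = (\<Sum>i\<le>length w. if i = length u \<and> w = u @ v then 1 else 0)"
    unfolding nc_mult_def nc_mon_def by (intro sum.cong refl) auto
  also have "\<dots> = nc_mon (u @ v) w"
    by (auto simp: nc_mon_def)
  finally show "nc_mult (nc_mon u) (nc_mon v) w = nc_mon (u @ v) w" .
qed

lemma nc_mult_sum_left:
  "nc_mult (\<lambda>w. \<Sum>k\<in>K. c k * h k w) g = (\<lambda>w. \<Sum>k\<in>K. c k * nc_mult (h k) g w)"
  unfolding nc_mult_def by (auto simp: sum_distrib_left sum_distrib_right algebra_simps intro!: sum.swap)

lemma nc_mult_sum_right:
  "nc_mult f (\<lambda>w. \<Sum>k\<in>K. c k * h k w) = (\<lambda>w. \<Sum>k\<in>K. c k * nc_mult f (h k) w)"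
  unfolding nc_mult_def by (auto simp: sum_distrib_left sum_distrib_right algebra_simps intro!: sum.swap)

lemma nc_mult_eq_double_sum:
  assumes "nc_fin f" "nc_fin g"
  shows "nc_mult f g = (\<lambda>w. \<Sum>u\<in>nc_supp f. \<Sum>v\<in>nc_supp g. (f u * g v) * nc_mon (u @ v) w)"
proof -
  have "nc_mult f g = nc_mult (\<lambda>w. \<Sum>u\<in>nc_supp f. f u * nc_mon u w) (\<lambda>w. \<Sum>v\<in>nc_supp g. g v * nc_mon v w)"
    using nc_decomp[OF assms(1)] nc_decomp[OF assms(2)] by simp
  then show ?thesis
    by (simp add: nc_mult_sum_left nc_mult_sum_right nc_mult_mon sum_distrib_left mult.assoc)
qed

lemma nc_fin_mult: "nc_fin f \<Longrightarrow> nc_fin g \<Longrightarrow> nc_fin (nc_mult f g)"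
  by (simp add: nc_mult_eq_double_sum nc_fin_sum nc_fin_scale nc_fin_mon)

lemma msmult_0 [simp]: "msmult 0 M = 0"
  by (simp add: msmult_def vec_eq_iff)

lemma msmult_1 [simp]: "msmult 1 M = M"
  by (simp add: msmult_def vec_eq_iff)

lemma msmult_add_left: "msmult (a + b) M = msmult a M + msmult b M"
  by (simp add: msmult_def vec_eq_iff smult_add_left)

lemma msmult_add_right: "msmult c (A + B) = msmult c A + msmult c B"
  by (simp add: msmult_def vec_eq_iff smult_add_right)

lemma msmult_msmult: "msmult a (msmult b M) = msmult (a * b) M"
  by (simp add: msmult_def vec_eq_iff)

lemma msmult_eq_mat: "msmult c M = mat [:c:] ** M"
  by (simp add: msmult_def vec_eq_iff mat_mult_nth)

lemma msmult_mult_left: "msmult c A ** B = msmult c (A ** B)"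
  by (metis msmult_eq_mat matrix_mul_assoc)

lemma msmult_mult_right: "A ** msmult c B = msmult c (A ** B)"
  by (simp add: msmult_eq_mat mat_mult_left_commute)

lemma msmult_sum_right: "msmult c (\<Sum>k\<in>K. M k) = (\<Sum>k\<in>K. msmult c (M k))"
  by (simp add: msmult_eq_mat matrix_sum_ldistrib)

lemma msmult_minus1: "msmult (- 1) M = - M"
  by (simp add: msmult_def vec_eq_iff)

lemma word_val_Nil [simp]: "word_val a2 a3 [] = mat 1"
  by (simp add: word_val_def)

lemma word_val_Cons [simp]: "word_val a2 a3 (l # w) = gen_val a2 a3 l ** word_val a2 a3 w"
  by (simp add: word_val_def)

lemma word_val_append: "word_val a2 a3 (u @ v) = word_val a2 a3 u ** word_val a2 a3 v"
  by (induction u) (simp_all add: matrix_mul_assoc)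

lemma nc_eval_superset:
  assumes "finite F" "nc_supp f \<subseteq> F"
  shows "nc_eval a2 a3 f = (\<Sum>w\<in>F. msmult (f w) (word_val a2 a3 w))"
  unfolding nc_eval_def using assms
  by (intro sum.mono_neutral_left) (auto simp: nc_supp_def)

lemma nc_eval_zero [simp]: "nc_eval a2 a3 (\<lambda>w. 0) = 0"
  by (simp add: nc_eval_def)

lemma nc_eval_mon: "nc_eval a2 a3 (nc_mon u) = word_val a2 a3 u"
  by (simp add: nc_eval_def nc_mon_def)

lemma nc_eval_add:
  assumes "nc_fin f" "nc_fin g"
  shows "nc_eval a2 a3 (\<lambda>w. f w + g w) = nc_eval a2 a3 f + nc_eval a2 a3 g"
proof -
  have fin: "finite (nc_supp f \<union> nc_supp g)"
    using assms by (simp add: nc_fin_iff_finite_supp)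
  have supp: "nc_supp h \<subseteq> nc_supp f \<union> nc_supp g" if "h \<in> {f, g, \<lambda>w. f w + g w}" for h
    using that by (auto simp: nc_supp_def)
  show ?thesis
    using supp by (simp add: nc_eval_superset[OF fin] msmult_add_left sum.distrib)
qed

lemma nc_eval_scale:
  assumes "nc_fin f"
  shows "nc_eval a2 a3 (\<lambda>w. c * f w) = msmult c (nc_eval a2 a3 f)"
proof -
  have fin: "finite (nc_supp f)"
    using assms by (simp add: nc_fin_iff_finite_supp)
  have "nc_supp (\<lambda>w. c * f w) \<subseteq> nc_supp f"
    by (auto simp: nc_supp_def)
  then show ?thesis
    by (simp add: nc_eval_superset[OF fin] msmult_sum_right msmult_msmult)
qed

lemma nc_eval_diff:
  assumes "nc_fin f" "nc_fin g"
  shows "nc_eval a2 a3 (\<lambda>w. f w - g w) = nc_eval a2 a3 f - nc_eval a2 a3 g"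
proof -
  have "(\<lambda>w. f w - g w) = (\<lambda>w. f w + (- 1) * g w)"
    by simp
  then have "nc_eval a2 a3 (\<lambda>w. f w - g w) = nc_eval a2 a3 f + msmult (- 1) (nc_eval a2 a3 g)"
    using assms by (simp only: nc_eval_add[OF assms(1) nc_fin_scale[OF assms(2)]] nc_eval_scale)
  then show ?thesis
    by (simp add: msmult_minus1)
qed

lemma nc_eval_sum:
  "finite K \<Longrightarrow> (\<And>k. k \<in> K \<Longrightarrow> nc_fin (h k)) \<Longrightarrow>
   nc_eval a2 a3 (\<lambda>w. \<Sum>k\<in>K. h k w) = (\<Sum>k\<in>K. nc_eval a2 a3 (h k))"
  by (induction K rule: finite_induct) (simp_all add: nc_eval_add nc_fin_sum)

lemma nc_eval_scale_mon: "nc_eval a2 a3 (\<lambda>w. c * nc_mon u w) = msmult c (word_val a2 a3 u)"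
  by (simp add: nc_eval_scale nc_fin_mon nc_eval_mon)

lemma nc_eval_lincomb:
  "finite K \<Longrightarrow> nc_eval a2 a3 (\<lambda>w. \<Sum>k\<in>K. c k * nc_mon (u k) w) = (\<Sum>k\<in>K. msmult (c k) (word_val a2 a3 (u k)))"
  by (simp add: nc_eval_sum nc_fin_scale nc_fin_mon nc_eval_scale_mon)

lemma nc_eval_mult:
  assumes "nc_fin f" "nc_fin g"
  shows "nc_eval a2 a3 (nc_mult f g) = nc_eval a2 a3 f ** nc_eval a2 a3 g"
proof -
  have fin: "finite (nc_supp f)" "finite (nc_supp g)"
    using assms by (simp_all add: nc_fin_iff_finite_supp)
  have "nc_eval a2 a3 (nc_mult f g) =
      (\<Sum>u\<in>nc_supp f. \<Sum>v\<in>nc_supp g. msmult (f u * g v) (word_val a2 a3 (u @ v)))"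
    unfolding nc_mult_eq_double_sum[OF assms] using fin
    by (simp add: nc_eval_sum nc_fin_sum nc_fin_scale nc_fin_mon nc_eval_scale_mon)
  also have "\<dots> = nc_eval a2 a3 f ** nc_eval a2 a3 g"
    by (simp add: nc_eval_superset[OF fin(1)] nc_eval_superset[OF fin(2)] matrix_sum_ldistrib
        matrix_sum_rdistrib word_val_append msmult_mult_left msmult_mult_right msmult_msmult msmult_sum_right
        mult.commute)
      (rule sum.swap)
  finally show ?thesis .
qed

lemma nc_ideal_fin: "f \<in> nc_ideal G \<Longrightarrow> (\<And>g. g \<in> G \<Longrightarrow> nc_fin g) \<Longrightarrow> nc_fin f"
  by (induction rule: nc_ideal.induct) (auto intro: nc_fin_zero nc_fin_add nc_fin_mult)

lemma nc_mult_const_left: "nc_mult (\<lambda>w. if w = [] then c else 0) f = (\<lambda>w. c * f w)"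
proof
  fix w
  have "nc_mult (\<lambda>w. if w = [] then c else 0) f w = (\<Sum>i\<le>length w. if i = 0 then c * f w else 0)"
    unfolding nc_mult_def by (intro sum.cong refl) auto
  then show "nc_mult (\<lambda>w. if w = [] then c else 0) f w = c * f w"
    by simp
qed

lemma nc_ideal_scale: "f \<in> nc_ideal G \<Longrightarrow> (\<lambda>w. c * f w) \<in> nc_ideal G"
proof -
  assume "f \<in> nc_ideal G"
  moreover have "nc_fin (\<lambda>w. if w = [] then c else 0)"
    unfolding nc_fin_def by (rule finite_subset[of _ "{[]}"]) auto
  ultimately show ?thesis
    using nc_ideal.lmult nc_mult_const_left by metis
qed

lemma nc_ideal_sum:
  "finite A \<Longrightarrow> (\<And>a. a \<in> A \<Longrightarrow> h a \<in> nc_ideal G) \<Longrightarrow> (\<lambda>w. \<Sum>a\<in>A. h a w) \<in> nc_ideal G"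
  by (induction A rule: finite_induct) (auto intro: nc_ideal.zero nc_ideal.add)

lemma nc_eval_nc_ideal:
  assumes "f \<in> nc_ideal G" "\<And>g. g \<in> G \<Longrightarrow> nc_fin g \<and> nc_eval a2 a3 g = 0"
  shows "nc_eval a2 a3 f = 0"
  using assms(1)
proof (induction rule: nc_ideal.induct)
  case (add f g)
  then show ?case
    using nc_ideal_fin assms(2) by (simp add: nc_eval_add)
next
  case (lmult f a)
  then show ?case
    using nc_ideal_fin assms(2) by (simp add: nc_eval_mult)
next
  case (rmult f a)
  then show ?case
    using nc_ideal_fin assms(2) by (simp add: nc_eval_mult)
qed (simp_all add: assms(2))

definition nc_cong :: "ncpoly set \<Rightarrow> ncpoly \<Rightarrow> ncpoly \<Rightarrow> bool" where
  "nc_cong G f g \<longleftrightarrow> (\<lambda>w. f w - g w) \<in> nc_ideal G"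

lemma nc_cong_refl: "nc_cong G f f"
  by (simp add: nc_cong_def nc_ideal.zero)

lemma nc_cong_trans: "nc_cong G f g \<Longrightarrow> nc_cong G g h \<Longrightarrow> nc_cong G f h"
  unfolding nc_cong_def by (drule (1) nc_ideal.add) simp

lemma nc_cong_scale: "nc_cong G f g \<Longrightarrow> nc_cong G (\<lambda>w. c * f w) (\<lambda>w. c * g w)"
  unfolding nc_cong_def by (drule nc_ideal_scale[where c = c]) (simp add: algebra_simps)

lemma nc_mult_diff_left: "nc_mult (\<lambda>w. f w - g w) h = (\<lambda>w. nc_mult f h w - nc_mult g h w)"
  unfolding nc_mult_def by (simp add: algebra_simps sum_subtractf)

lemma nc_mult_diff_right: "nc_mult h (\<lambda>w. f w - g w) = (\<lambda>w. nc_mult h f w - nc_mult h g w)"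
  unfolding nc_mult_def by (simp add: algebra_simps sum_subtractf)

lemma nc_mult_scale_left: "nc_mult (\<lambda>w. c * f w) h = (\<lambda>w. c * nc_mult f h w)"
  unfolding nc_mult_def by (simp add: algebra_simps sum_distrib_left)

lemma nc_mult_scale_right: "nc_mult h (\<lambda>w. c * f w) = (\<lambda>w. c * nc_mult h f w)"
  unfolding nc_mult_def by (simp add: algebra_simps sum_distrib_left)

lemma nc_cong_Cons:
  assumes "nc_cong G (nc_mon w) (\<lambda>v. c * nc_mon u v)"
  shows "nc_cong G (nc_mon (l # w)) (\<lambda>v. c * nc_mon (l # u) v)"
proof -
  have "nc_mult (nc_mon [l]) (\<lambda>v. nc_mon w v - c * nc_mon u v) \<in> nc_ideal G"
    using assms unfolding nc_cong_def by (rule nc_ideal.lmult) (rule nc_fin_mon)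
  then show ?thesis
    by (simp add: nc_cong_def nc_mult_diff_right nc_mult_scale_right nc_mult_mon)
qed

lemma nc_cong_append:
  assumes "(\<lambda>w. nc_mon u w - c * nc_mon v w) \<in> nc_ideal G"
  shows "nc_cong G (nc_mon (u @ r)) (\<lambda>w. c * nc_mon (v @ r) w)"
proof -
  have "nc_mult (\<lambda>w. nc_mon u w - c * nc_mon v w) (nc_mon r) \<in> nc_ideal G"
    using assms by (rule nc_ideal.rmult) (rule nc_fin_mon)
  then show ?thesis
    by (simp add: nc_cong_def nc_mult_diff_left nc_mult_scale_left nc_mult_mon)
qed

section \<open>Normal words modulo the relations\<close>

definition rel_gens :: "ncpoly set" where
  "rel_gens = { nc_mon [A2, A2, A2],
       (\<lambda>w. nc_mon [A3, A3] w - nc_mon [A3] w),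
       (\<lambda>w. nc_mon [A3, A2, A3, A2, A3] w - 4 * nc_mon [A3, A2, A2, A3] w) }"

lemma rel_I_eq: "rel_I = nc_ideal rel_gens"
  by (simp add: rel_I_def rel_gens_def)

lemma rel_gens_reductions:
  "(\<lambda>w. nc_mon [A2, A2, A2] w - 0 * nc_mon [] w) \<in> nc_ideal rel_gens"
  "(\<lambda>w. nc_mon [A3, A3] w - 1 * nc_mon [A3] w) \<in> nc_ideal rel_gens"
  "(\<lambda>w. nc_mon [A3, A2, A2, A3] w - 1 / 4 * nc_mon [A3, A2, A3, A2, A3] w) \<in> nc_ideal rel_gens"
proof -
  have gen: "g \<in> nc_ideal rel_gens" if "g \<in> rel_gens" for g
    using that by (rule nc_ideal.gen)
  have "nc_mon [A2, A2, A2] \<in> nc_ideal rel_gens" "(\<lambda>w. nc_mon [A3, A3] w - nc_mon [A3] w) \<in> nc_ideal rel_gens"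
    by (rule gen, simp add: rel_gens_def)+
  then show "(\<lambda>w. nc_mon [A2, A2, A2] w - 0 * nc_mon [] w) \<in> nc_ideal rel_gens"
    "(\<lambda>w. nc_mon [A3, A3] w - 1 * nc_mon [A3] w) \<in> nc_ideal rel_gens"
    by simp_all
  have "(\<lambda>w. (- 1 / 4) * (nc_mon [A3, A2, A3, A2, A3] w - 4 * nc_mon [A3, A2, A2, A3] w)) \<in> nc_ideal rel_gens"
    by (intro nc_ideal_scale gen) (simp add: rel_gens_def)
  then show "(\<lambda>w. nc_mon [A3, A2, A2, A3] w - 1 / 4 * nc_mon [A3, A2, A3, A2, A3] w) \<in> nc_ideal rel_gens"
    by (simp add: algebra_simps)
qed

datatype nkey = KS nat | KE nat nat nat

fun nkey_valid :: "nkey \<Rightarrow> bool" where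
  "nkey_valid (KS i) \<longleftrightarrow> i < 3"
| "nkey_valid (KE i n j) \<longleftrightarrow> i < 3 \<and> j < 3"

fun nword :: "nkey \<Rightarrow> gen list" where
  "nword (KS i) = replicate i A2"
| "nword (KE i n j) = replicate i A2 @ concat (replicate n [A3, A2]) @ [A3] @ replicate j A2"

lemma concat_replicate_A3_A2: "concat (replicate n [A3, A2]) @ [A3] = A3 # concat (replicate n [A2, A3])"
  by (induction n) simp_all

lemma nword_A2_Cons:
  assumes "nkey_valid k"
  shows "\<exists>c k'. nkey_valid k' \<and> nc_cong rel_gens (nc_mon (A2 # nword k)) (\<lambda>v. c * nc_mon (nword k') v)"
proof (cases k)
  case (KS i)
  show ?thesis
  proof (cases "i < 2")
    case True
    then show ?thesis
      using KS by (intro exI[of _ 1] exI[of _ "KS (Suc i)"]) (simp add: nc_cong_refl)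
  next
    case False
    then have "A2 # nword k = [A2, A2, A2] @ []"
      using KS assms by (simp add: numeral_2_eq_2 numeral_3_eq_3 less_Suc_eq)
    then show ?thesis
      using nc_cong_append[OF rel_gens_reductions(1), of "[]"] by (intro exI[of _ 0] exI[of _ "KS 0"]) simp
  qed
next
  case (KE i n j)
  show ?thesis
  proof (cases "i < 2")
    case True
    then show ?thesis
      using KE assms by (intro exI[of _ 1] exI[of _ "KE (Suc i) n j"]) (simp add: nc_cong_refl)
  next
    case False
    then have "A2 # nword k = [A2, A2, A2] @ concat (replicate n [A3, A2]) @ [A3] @ replicate j A2"
      using KE assms by (simp add: numeral_2_eq_2 numeral_3_eq_3 less_Suc_eq)
    then show ?thesis
      using nc_cong_append[OF rel_gens_reductions(1)] by (intro exI[of _ 0] exI[of _ "KS 0"]) simp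
  qed
qed

lemma nword_A3_Cons:
  assumes "nkey_valid k"
  shows "\<exists>c k'. nkey_valid k' \<and> nc_cong rel_gens (nc_mon (A3 # nword k)) (\<lambda>v. c * nc_mon (nword k') v)"
proof (cases k)
  case (KS i)
  then show ?thesis
    using assms by (intro exI[of _ 1] exI[of _ "KE 0 0 i"]) (simp add: nc_cong_refl)
next
  case (KE i n j)
  define r where "r = concat (replicate n [A2, A3]) @ replicate j A2"
  consider "i = 0" | "i = 1" | "i = 2"
    using assms KE by force
  then show ?thesis
  proof cases
    case 1
    then have "A3 # nword k = [A3, A3] @ r" and "nword (KE 0 n j) = [A3] @ r"
      using KE by (simp_all add: r_def concat_replicate_A3_A2)
    then show ?thesis
      using nc_cong_append[OF rel_gens_reductions(2), of r] KE assms
      by (intro exI[of _ 1] exI[of _ "KE 0 n j"]) simp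
  next
    case 2
    then show ?thesis
      using KE assms by (intro exI[of _ 1] exI[of _ "KE 0 (Suc n) j"]) (simp add: nc_cong_refl)
  next
    case 3
    then have "A3 # nword k = [A3, A2, A2, A3] @ r" and "nword (KE 0 (Suc (Suc n)) j) = [A3, A2, A3, A2, A3] @ r"
      using KE by (simp_all add: r_def numeral_2_eq_2 concat_replicate_A3_A2)
    then show ?thesis
      using nc_cong_append[OF rel_gens_reductions(3), of r] KE assms
      by (intro exI[of _ "1 / 4"] exI[of _ "KE 0 (Suc (Suc n)) j"]) simp
  qed
qed

lemma word_reduces_to_nword: "\<exists>c k. nkey_valid k \<and> nc_cong rel_gens (nc_mon w) (\<lambda>v. c * nc_mon (nword k) v)"
proof (induction w)
  case Nil
  show ?case
    by (intro exI[of _ 1] exI[of _ "KS 0"]) (simp add: nc_cong_refl)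
next
  case (Cons l w)
  then obtain c k where k: "nkey_valid k" and w: "nc_cong rel_gens (nc_mon w) (\<lambda>v. c * nc_mon (nword k) v)"
    by blast
  obtain c' k' where k': "nkey_valid k'"
    and l: "nc_cong rel_gens (nc_mon (l # nword k)) (\<lambda>v. c' * nc_mon (nword k') v)"
    using nword_A2_Cons[OF k] nword_A3_Cons[OF k] by (cases l) blast+
  have "nc_cong rel_gens (nc_mon (l # w)) (\<lambda>v. c * (c' * nc_mon (nword k') v))"
    using nc_cong_trans[OF nc_cong_Cons[OF w] nc_cong_scale[OF l]] .
  then show ?case
    using k' by (intro exI[of _ "c * c'"] exI[of _ k']) (simp add: mult.assoc)
qed

lemma nc_normal_form:
  assumes "nc_fin f"
  shows "\<exists>K c. finite K \<and> (\<forall>k\<in>K. nkey_valid k) \<and>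
    nc_cong rel_gens f (\<lambda>w. \<Sum>k\<in>K. c k * nc_mon (nword k) w)"
proof -
  obtain C N where CN: "\<And>u. nkey_valid (N u) \<and> nc_cong rel_gens (nc_mon u) (\<lambda>v. C u * nc_mon (nword (N u)) v)"
    using word_reduces_to_nword by metis
  define A where "A = nc_supp f"
  have fin: "finite A"
    using assms by (simp add: A_def nc_fin_iff_finite_supp)
  define c where "c k = (\<Sum>u\<in>{u\<in>A. N u = k}. f u * C u)" for k
  have "(\<lambda>w. f w - (\<Sum>k\<in>N ` A. c k * nc_mon (nword k) w)) =
      (\<lambda>w. \<Sum>u\<in>A. f u * (nc_mon u w - C u * nc_mon (nword (N u)) w))"
  proof
    fix w
    have "(\<Sum>k\<in>N ` A. c k * nc_mon (nword k) w) =
        (\<Sum>k\<in>N ` A. \<Sum>u\<in>{u\<in>A. N u = k}. f u * C u * nc_mon (nword (N u)) w)"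
      unfolding c_def sum_distrib_right by (intro sum.cong refl) auto
    also have "\<dots> = (\<Sum>u\<in>A. f u * C u * nc_mon (nword (N u)) w)"
      using fin by (rule sum.image_gen[symmetric])
    finally have "(\<Sum>k\<in>N ` A. c k * nc_mon (nword k) w) = (\<Sum>u\<in>A. f u * C u * nc_mon (nword (N u)) w)" .
    moreover have "f w = (\<Sum>u\<in>A. f u * nc_mon u w)"
      using nc_decomp[OF assms] unfolding A_def by metis
    ultimately show "f w - (\<Sum>k\<in>N ` A. c k * nc_mon (nword k) w) =
        (\<Sum>u\<in>A. f u * (nc_mon u w - C u * nc_mon (nword (N u)) w))"
      by (simp add: algebra_simps sum_subtractf)
  qed
  also have "\<dots> \<in> nc_ideal rel_gens"
    using fin
  proof (intro nc_ideal_sum nc_ideal_scale)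
    show "(\<lambda>w. nc_mon u w - C u * nc_mon (nword (N u)) w) \<in> nc_ideal rel_gens" for u
      using CN[of u] unfolding nc_cong_def by blast
  qed
  finally show ?thesis
    using CN fin unfolding nc_cong_def by (intro exI[of _ "N ` A"] exI[of _ c]) auto
qed

section \<open>The representation by S and E\<close>

definition unit_mat :: "'n \<Rightarrow> 'n \<Rightarrow> 'a::zero_neq_one^'n^'n" where
  "unit_mat r s = (\<chi> i j. of_bool (i = r \<and> j = s))"

lemma matrix_eq_sum_unit_mat:
  "A = (\<Sum>r\<in>UNIV. \<Sum>s\<in>UNIV. mat (A $ r $ s) ** (unit_mat r s :: 'a::semiring_1^'n^'n))"
proof -
  have "(\<Sum>s\<in>UNIV. A $ r $ s * of_bool (i = r \<and> j = s)) = of_bool (i = r) * A $ r $ j" for r i j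
    by (cases "i = r") auto
  then show ?thesis
    by (simp add: vec_eq_iff mat_mult_nth unit_mat_def)
qed

lemma unit_mat_mat3:
  "(unit_mat r s :: 'a::zero_neq_one^3^3) =
    mat3 (of_bool (r = 1 \<and> s = 1)) (of_bool (r = 1 \<and> s = 2)) (of_bool (r = 1 \<and> s = 3))
         (of_bool (r = 2 \<and> s = 1)) (of_bool (r = 2 \<and> s = 2)) (of_bool (r = 2 \<and> s = 3))
         (of_bool (r = 3 \<and> s = 1)) (of_bool (r = 3 \<and> s = 2)) (of_bool (r = 3 \<and> s = 3))"
  unfolding vec_eq_iff forall_3 by (auto simp: unit_mat_def)

lemma mat_sum: "mat (\<Sum>k\<in>K. f k) = (\<Sum>k\<in>K. mat (f k) :: 'a::comm_monoid_add^'n^'n)"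
  by (induction K rule: infinite_finite_induct) (simp_all flip: mat_add)

definition Emat :: "complex poly^3^3" where
  "Emat = Tmat ** unit_mat 3 1 ** Tmat"

abbreviation wval :: "gen list \<Rightarrow> complex poly^3^3" where
  "wval \<equiv> word_val Sm Emat"

abbreviation nval :: "ncpoly \<Rightarrow> complex poly^3^3" where
  "nval \<equiv> nc_eval Sm Emat"

lemma Emat_eq: "Emat = mat3 0 0 0 [:0, 1:] 1 0 [:0, 0, 1:] [:0, 1:] 0"
  unfolding vec_eq_iff forall_3
  by (simp add: Emat_def Tmat_def unit_mat_def toeplitz3_def matrix_matrix_mult_def sum_3)

lemma rel_gens_nval: "g \<in> rel_gens \<Longrightarrow> nc_fin g \<and> nval g = 0"
  unfolding rel_gens_def
  by (auto intro!: nc_fin_mon nc_fin_diff nc_fin_scale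
      simp: nc_eval_diff nc_eval_scale nc_eval_mon nc_fin_mon nc_fin_scale Emat_eq Sm_def toeplitz3_def
        msmult_def mat3_mult mat3_diff mat3_zero vec_eq_iff forall_3)

lemma nval_rel_I: "f \<in> rel_I \<Longrightarrow> nval f = 0"
  unfolding rel_I_eq by (erule nc_eval_nc_ideal) (rule rel_gens_nval)

lemma Emat_Sm_Emat: "Emat ** Sm ** Emat = mat [:0, 2:] ** Emat"
  by (simp add: Emat_eq Sm_def toeplitz3_def mat3_mat mat3_mult)

definition ix :: "nat \<Rightarrow> 3" where
  "ix i = (if i = 0 then 1 else if i = 1 then 2 else 3)"

lemma ix_inj: "i < 3 \<Longrightarrow> i' < 3 \<Longrightarrow> ix i = ix i' \<longleftrightarrow> i = i'"
  by (auto simp: ix_def)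

lemma ix_surj: "\<exists>a<3. ix a = r"
  using exhaust_3[of r]
proof (elim disjE)
  assume "r = 1"
  then show ?thesis by (intro exI[of _ 0]) (simp add: ix_def)
next
  assume "r = 2"
  then show ?thesis by (intro exI[of _ 1]) (simp add: ix_def)
next
  assume "r = 3"
  then show ?thesis by (intro exI[of _ 2]) (simp add: ix_def)
qed

lemma wval_SES:
  assumes "a < 3" "b < 3"
  shows "wval (replicate a A2 @ [A3] @ replicate b A2) = Tmat ** unit_mat (ix (2 - a)) (ix b) ** Tmat"
  using assms
  by (auto simp: less_Suc_eq numeral_3_eq_3 numeral_2_eq_2 word_val_append Emat_def Sm_def Tmat_def
      toeplitz3_def unit_mat_mat3 ix_def mat3_mult simp flip: one_pCons)

lemma wval_ES_power_E: "wval (concat (replicate n [A3, A2]) @ [A3]) = mat ([:0, 2:]^n) ** Emat"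
proof (induction n)
  case (Suc n)
  have "wval (concat (replicate (Suc n) [A3, A2]) @ [A3]) = Emat ** Sm ** (mat ([:0, 2:]^n) ** Emat)"
    using Suc by (simp add: matrix_mul_assoc)
  also have "\<dots> = mat ([:0, 2:]^n) ** (Emat ** Sm ** Emat)"
    by (simp only: mat_mult_left_commute flip: matrix_mul_assoc)
  finally show ?case
    by (simp add: Emat_Sm_Emat mat_mult_mat mult.commute)
qed simp

lemma wval_KE:
  assumes "a < 3" "b < 3"
  shows "wval (nword (KE a n b)) = mat ([:0, 2:]^n) ** (Tmat ** unit_mat (ix (2 - a)) (ix b) ** Tmat)"
proof -
  have "wval (nword (KE a n b)) =
      wval (replicate a A2) ** wval (concat (replicate n [A3, A2]) @ [A3]) ** wval (replicate b A2)"
    by (simp add: word_val_append matrix_mul_assoc)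
  also have "\<dots> = wval (replicate a A2) ** (mat ([:0, 2:]^n) ** Emat) ** wval (replicate b A2)"
    by (simp only: wval_ES_power_E)
  also have "\<dots> = mat ([:0, 2:]^n) ** wval (replicate a A2 @ [A3] @ replicate b A2)"
    by (simp only: word_val_append word_val_Cons word_val_Nil gen_val.simps matrix_mul_rid
        mat_mult_left_commute flip: matrix_mul_assoc)
  finally show ?thesis
    using wval_SES[OF assms] by simp
qed

lemma W_setI: "toeplitz3 [:c0:] [:c1:] [:c2:] + Tmat ** Q ** Tmat \<in> W_set"
  unfolding W_set_def by blast

lemma W_set_add: "A \<in> W_set \<Longrightarrow> B \<in> W_set \<Longrightarrow> A + B \<in> W_set"
proof -
  assume "A \<in> W_set" "B \<in> W_set"
  then obtain a0 a1 a2 QA b0 b1 b2 QB where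
    "A = toeplitz3 [:a0:] [:a1:] [:a2:] + Tmat ** QA ** Tmat" "B = toeplitz3 [:b0:] [:b1:] [:b2:] + Tmat ** QB ** Tmat"
    unfolding W_set_def by blast
  then have "A + B = toeplitz3 [:a0 + b0:] [:a1 + b1:] [:a2 + b2:] + Tmat ** (QA + QB) ** Tmat"
    by (simp add: toeplitz3_def mat3_add matrix_add_ldistrib matrix_add_rdistrib algebra_simps)
  then show ?thesis
    by (simp add: W_setI)
qed

lemma W_set_msmult: "A \<in> W_set \<Longrightarrow> msmult c A \<in> W_set"
proof -
  assume "A \<in> W_set"
  then obtain a0 a1 a2 Q where "A = toeplitz3 [:a0:] [:a1:] [:a2:] + Tmat ** Q ** Tmat"
    unfolding W_set_def by blast
  moreover have "msmult c (toeplitz3 [:a0:] [:a1:] [:a2:]) = toeplitz3 [:c * a0:] [:c * a1:] [:c * a2:]"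
    unfolding vec_eq_iff forall_3 by (simp add: msmult_def toeplitz3_def)
  ultimately have "msmult c A = toeplitz3 [:c * a0:] [:c * a1:] [:c * a2:] + Tmat ** msmult c Q ** Tmat"
    by (simp add: msmult_add_right msmult_mult_left msmult_mult_right)
  then show ?thesis
    by (simp add: W_setI)
qed

lemma W_set_zero: "0 \<in> W_set"
  using W_setI[of 0 0 0 0] by (simp add: toeplitz3_zero)

lemma W_set_sum: "(\<And>k. k \<in> K \<Longrightarrow> M k \<in> W_set) \<Longrightarrow> (\<Sum>k\<in>K. M k) \<in> W_set"
  by (induction K rule: infinite_finite_induct) (auto intro: W_set_add W_set_zero)

lemma W_set_Sm_mult: "A \<in> W_set \<Longrightarrow> Sm ** A \<in> W_set"
proof -
  assume "A \<in> W_set"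
  then obtain a0 a1 a2 Q where "A = toeplitz3 [:a0:] [:a1:] [:a2:] + Tmat ** Q ** Tmat"
    unfolding W_set_def by blast
  moreover have "Sm ** Tmat = Tmat ** Sm"
    unfolding Sm_def Tmat_def by (rule toeplitz3_commute)
  ultimately have "Sm ** A = toeplitz3 [:0:] [:a0:] [:a1:] + Tmat ** (Sm ** Q) ** Tmat"
    by (simp add: matrix_add_ldistrib Sm_def toeplitz3_mult matrix_mul_assoc)
  then show ?thesis
    using W_setI[of 0 a0 a1 "Sm ** Q"] by simp
qed

lemma W_set_Emat_mult: "A \<in> W_set \<Longrightarrow> Emat ** A \<in> W_set"
proof -
  assume "A \<in> W_set"
  then obtain a0 a1 a2 Q where "A = toeplitz3 [:a0:] [:a1:] [:a2:] + Tmat ** Q ** Tmat"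
    unfolding W_set_def by blast
  moreover have "Tmat ** toeplitz3 [:a0:] [:a1:] [:a2:] = toeplitz3 [:a0:] [:a1:] [:a2:] ** Tmat"
    unfolding Tmat_def by (rule toeplitz3_commute)
  ultimately have "Emat ** A = toeplitz3 [:0:] [:0:] [:0:] +
      Tmat ** (unit_mat 3 1 ** toeplitz3 [:a0:] [:a1:] [:a2:] + unit_mat 3 1 ** Tmat ** Tmat ** Q) ** Tmat"
    by (simp add: Emat_def matrix_add_ldistrib matrix_add_rdistrib toeplitz3_zero flip: matrix_mul_assoc)
  then show ?thesis
    using W_setI[of 0 0 0] by simp
qed

lemma nval_in_W_set: "nval f \<in> W_set"
proof -
  have "wval w \<in> W_set" for w
  proof (induction w)
    case Nil
    then show ?case
      using W_setI[of 1 0 0 0] by (simp add: toeplitz3_def mat3_mat flip: one_pCons)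
  next
    case (Cons l w)
    then show ?case
      by (cases l) (simp_all add: W_set_Sm_mult W_set_Emat_mult)
  qed
  then show ?thesis
    unfolding nc_eval_def by (intro W_set_sum W_set_msmult)
qed

definition nval_image :: "(complex poly^3^3) set" where
  "nval_image = {nval f | f. nc_fin f}"

lemma nval_imageI: "nc_fin f \<Longrightarrow> nval f \<in> nval_image"
  unfolding nval_image_def by blast

lemma nval_imageE:
  assumes "A \<in> nval_image"
  obtains f where "nc_fin f" "A = nval f"
  using assms unfolding nval_image_def by blast

lemma wval_in_nval_image: "wval w \<in> nval_image"
  using nval_imageI[OF nc_fin_mon] by (simp add: nc_eval_mon)

lemma nval_image_zero: "0 \<in> nval_image"
  using nval_imageI[OF nc_fin_zero] by simp

lemma nval_image_add: "A \<in> nval_image \<Longrightarrow> B \<in> nval_image \<Longrightarrow> A + B \<in> nval_image"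
  by (elim nval_imageE) (metis nc_eval_add nc_fin_add nval_imageI)

lemma nval_image_msmult: "A \<in> nval_image \<Longrightarrow> msmult c A \<in> nval_image"
  by (elim nval_imageE) (metis nc_eval_scale nc_fin_scale nval_imageI)

lemma nval_image_sum: "(\<And>k. k \<in> K \<Longrightarrow> M k \<in> nval_image) \<Longrightarrow> (\<Sum>k\<in>K. M k) \<in> nval_image"
  by (induction K rule: infinite_finite_induct) (auto intro: nval_image_add nval_image_zero)

lemma toeplitz3_const_in_nval_image: "toeplitz3 [:c0:] [:c1:] [:c2:] \<in> nval_image"
proof -
  have eq: "toeplitz3 [:c0:] [:c1:] [:c2:] = msmult c0 (wval []) + msmult c1 (wval [A2]) + msmult c2 (wval [A2, A2])"
    unfolding vec_eq_iff forall_3 by (simp add: msmult_def Sm_def toeplitz3_def mat3_mult)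
  show ?thesis
    unfolding eq by (intro nval_image_add nval_image_msmult wval_in_nval_image)
qed

lemma power_pCons_0_2: "[:0, 2:]^k = smult (2^k) (monom 1 k :: complex poly)"
proof -
  have "[:0, 2:] = smult 2 [:0, 1 :: complex:]"
    by simp
  then show ?thesis
    by (simp only: smult_power monom_altdef smult_1_left)
qed

lemma monom_eq_smult_power: "monom c k = smult (c / 2^k) ([:0, 2:]^k :: complex poly)"
  by (simp add: power_pCons_0_2 smult_monom)

lemma mat_Tmat_unit_mat_Tmat_in_nval_image: "mat p ** (Tmat ** unit_mat r s ** Tmat) \<in> nval_image"
proof -
  obtain a b where a: "a < 3" "ix a = r" and b: "b < 3" "ix b = s"
    using ix_surj by metis
  have "mat (monom c k) ** (Tmat ** unit_mat r s ** Tmat) = msmult (c / 2^k) (wval (nword (KE (2 - a) k b)))"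
    for c k
  proof -
    have "wval (nword (KE (2 - a) k b)) = mat ([:0, 2:]^k) ** (Tmat ** unit_mat r s ** Tmat)"
      using wval_KE[of "2 - a" b k] a b by simp
    then show ?thesis
      by (simp add: monom_eq_smult_power msmult_eq_mat mat_mult_mat)
  qed
  then have monom: "mat (monom c k) ** (Tmat ** unit_mat r s ** Tmat) \<in> nval_image" for c k
    by (simp add: nval_image_msmult wval_in_nval_image)
  have "mat p ** (Tmat ** unit_mat r s ** Tmat) =
      (\<Sum>k\<le>degree p. mat (monom (coeff p k) k) ** (Tmat ** unit_mat r s ** Tmat))"
    by (subst (1) poly_as_sum_of_monoms[symmetric]) (simp only: mat_sum matrix_sum_rdistrib)
  then show ?thesis
    by (simp only:) (rule nval_image_sum[OF monom])
qed

lemma W_set_subset_nval_image: "W_set \<subseteq> nval_image"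
proof
  fix \<theta>
  assume "\<theta> \<in> W_set"
  then obtain c0 c1 c2 Q where \<theta>: "\<theta> = toeplitz3 [:c0:] [:c1:] [:c2:] + Tmat ** Q ** Tmat"
    unfolding W_set_def by blast
  have "Tmat ** Q ** Tmat = (\<Sum>r\<in>UNIV. \<Sum>s\<in>UNIV. mat (Q $ r $ s) ** (Tmat ** unit_mat r s ** Tmat))"
    by (subst matrix_eq_sum_unit_mat[of Q])
      (simp add: matrix_sum_ldistrib matrix_sum_rdistrib mat_mult_left_commute flip: matrix_mul_assoc)
  then show "\<theta> \<in> nval_image"
    unfolding \<theta> by (simp add: nval_image_add nval_image_sum toeplitz3_const_in_nval_image
        mat_Tmat_unit_mat_Tmat_in_nval_image)
qed

section \<open>Linear independence of the normal words\<close>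

(* Coordinates dual to the images of the normal words, read off from adj(T) M adj(T). *)
fun nkey_coord :: "nkey \<Rightarrow> complex poly^3^3 \<Rightarrow> complex" where
  "nkey_coord (KS a) M = coeff ((Tadj ** M ** Tadj) $ 1 $ ix a) 4"
| "nkey_coord (KE a n b) M = coeff ((Tadj ** M ** Tadj) $ ix (2 - a) $ ix b) (n + 6) / 2^n"

lemma nkey_coord_lincomb:
  "nkey_coord k (\<Sum>k'\<in>K. msmult (c k') (M k')) = (\<Sum>k'\<in>K. c k' * nkey_coord k (M k'))"
proof -
  have "Tadj ** (\<Sum>k'\<in>K. msmult (c k') (M k')) ** Tadj = (\<Sum>k'\<in>K. msmult (c k') (Tadj ** M k' ** Tadj))"
    by (simp add: matrix_sum_ldistrib matrix_sum_rdistrib msmult_mult_left msmult_mult_right)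
  then show ?thesis
    by (cases k) (simp_all add: msmult_def coeff_sum sum_divide_distrib)
qed

lemma Tadj_wval_KS:
  "Tadj ** Tadj = toeplitz3 [:0, 0, 0, 0, 1:] [:0, 0, 0, - 2:] [:0, 0, 3:]"
  "Tadj ** Sm ** Tadj = toeplitz3 0 [:0, 0, 0, 0, 1:] [:0, 0, 0, - 2:]"
  "Tadj ** (Sm ** Sm) ** Tadj = toeplitz3 0 0 [:0, 0, 0, 0, 1:]"
  by (simp_all add: Tadj_def Sm_def toeplitz3_mult)

lemma Tadj_wval_KS_entries:
  assumes "a < 3"
  shows "degree ((Tadj ** wval (nword (KS a)) ** Tadj) $ i $ j) \<le> 4"
    and "a' < 3 \<Longrightarrow> coeff ((Tadj ** wval (nword (KS a)) ** Tadj) $ 1 $ ix a') 4 = of_bool (a = a')"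
proof -
  consider "a = 0" | "a = 1" | "a = 2"
    using assms by linarith
  then show "degree ((Tadj ** wval (nword (KS a)) ** Tadj) $ i $ j) \<le> 4"
    using exhaust_3[of i] exhaust_3[of j] by cases (auto simp: Tadj_wval_KS numeral_2_eq_2 toeplitz3_def)
  show "coeff ((Tadj ** wval (nword (KS a)) ** Tadj) $ 1 $ ix a') 4 = of_bool (a = a')" if "a' < 3"
    using \<open>a < 3\<close> that
    by (auto simp: less_Suc_eq numeral_3_eq_3 numeral_2_eq_2 ix_def toeplitz3_def Tadj_wval_KS
        coeff_pCons eval_nat_numeral split: nat.split)
qed

lemma Tadj_wval_KE:
  assumes "a < 3" "b < 3"
  shows "Tadj ** wval (nword (KE a n b)) ** Tadj = mat (smult (2^n) (monom 1 (n + 6))) ** unit_mat (ix (2 - a)) (ix b)"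
proof -
  have "Tadj ** wval (nword (KE a n b)) ** Tadj =
      mat ([:0, 2:]^n) ** (Tadj ** (Tmat ** unit_mat (ix (2 - a)) (ix b) ** Tmat) ** Tadj)"
    by (simp only: wval_KE[OF assms] mat_mult_left_commute flip: matrix_mul_assoc)
  also have "\<dots> = mat ([:0, 2:]^n * monom 1 6) ** unit_mat (ix (2 - a)) (ix b)"
    by (simp add: Tadj_sandwich mat_mult_mat)
  finally show ?thesis
    by (simp add: power_pCons_0_2 mult_monom)
qed

lemma nkey_coord_nword:
  assumes "nkey_valid k" "nkey_valid k'"
  shows "nkey_coord k (wval (nword k')) = of_bool (k = k')"
proof (cases k)
  case (KS a)
  show ?thesis
  proof (cases k')
    case (KS a')
    then show ?thesis
      using \<open>k = KS a\<close> assms Tadj_wval_KS_entries(2)[of a' a] by auto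
  next
    case (KE a' n b')
    then show ?thesis
      using \<open>k = KS a\<close> assms by (simp add: Tadj_wval_KE mat_mult_nth unit_mat_def coeff_monom del: nword.simps)
  qed
next
  case (KE a n b)
  show ?thesis
  proof (cases k')
    case (KS a')
    then have "degree ((Tadj ** wval (nword (KS a')) ** Tadj) $ ix (2 - a) $ ix b) \<le> 4"
      using assms(2) Tadj_wval_KS_entries(1) by (simp del: nword.simps)
    then have "coeff ((Tadj ** wval (nword (KS a')) ** Tadj) $ ix (2 - a) $ ix b) (n + 6) = 0"
      by (intro coeff_eq_0) linarith
    then show ?thesis
      using \<open>k = KE a n b\<close> KS by (simp del: nword.simps)
  next
    case (KE a' n' b')
    have "ix (2 - a) = ix (2 - a') \<longleftrightarrow> a = a'" "ix b = ix b' \<longleftrightarrow> b = b'"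
      using \<open>k = KE a n b\<close> KE assms ix_inj by auto
    then show ?thesis
      using \<open>k = KE a n b\<close> KE assms
      by (auto simp: Tadj_wval_KE mat_mult_nth unit_mat_def coeff_monom simp del: nword.simps)
  qed
qed

lemma nwords_independent:
  assumes "finite K" "\<forall>k\<in>K. nkey_valid k" "(\<Sum>k\<in>K. msmult (c k) (wval (nword k))) = 0" "k \<in> K"
  shows "c k = 0"
proof -
  have "0 = nkey_coord k (\<Sum>k'\<in>K. msmult (c k') (wval (nword k')))"
    using assms(3) by (cases k) simp_all
  also have "\<dots> = (\<Sum>k'\<in>K. c k' * of_bool (k = k'))"
    using assms(2,4) by (simp add: nkey_coord_lincomb nkey_coord_nword)
  also have "\<dots> = c k"
    using assms(1,4) by simp
  finally show ?thesis ..
qed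

lemma nval_eq_zero_imp_rel_I:
  assumes "nc_fin f" "nval f = 0"
  shows "f \<in> rel_I"
proof -
  obtain K c where K: "finite K" "\<forall>k\<in>K. nkey_valid k"
    and cong: "nc_cong rel_gens f (\<lambda>w. \<Sum>k\<in>K. c k * nc_mon (nword k) w)"
    using nc_normal_form[OF assms(1)] by blast
  define g where "g = (\<lambda>w. \<Sum>k\<in>K. c k * nc_mon (nword k) w)"
  have g_fin: "nc_fin g"
    unfolding g_def by (intro nc_fin_sum nc_fin_scale nc_fin_mon)
  have "nval (\<lambda>w. f w - g w) = 0"
    using cong nval_rel_I unfolding nc_cong_def rel_I_eq g_def by blast
  then have "(\<Sum>k\<in>K. msmult (c k) (wval (nword k))) = 0"
    using assms g_fin K(1) by (simp add: nc_eval_diff nc_eval_lincomb g_def)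
  then have "\<forall>k\<in>K. c k = 0"
    using nwords_independent[OF K] by blast
  then have "g = (\<lambda>w. 0)"
    by (simp add: g_def)
  then show ?thesis
    using cong by (simp add: nc_cong_def rel_I_eq g_def)
qed

theorem theorem2:
  shows "Gamma_set = A_set \<and>
    (\<exists>a2 a3. a2 \<in> A_set \<and> a3 \<in> A_set \<and>
       (\<forall>f. nc_fin f \<longrightarrow> nc_eval a2 a3 f \<in> A_set) \<and>
       (\<forall>\<theta>\<in>A_set. \<exists>f. nc_fin f \<and> nc_eval a2 a3 f = \<theta>) \<and>
       (\<forall>f. nc_fin f \<longrightarrow> (nc_eval a2 a3 f = 0 \<longleftrightarrow> f \<in> rel_I)))"
proof -
  have A_eq_W: "A_set = W_set"
    using A_set_subset_W_set W_set_subset_A_set by blast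
  have "Sm = wval [A2]" "Emat = wval [A3]"
    by simp_all
  then have gens: "Sm \<in> A_set" "Emat \<in> A_set"
    unfolding A_eq_W by (metis nc_eval_mon nval_in_W_set)+
  have "\<forall>\<theta>\<in>A_set. \<exists>f. nc_fin f \<and> nval f = \<theta>"
    using W_set_subset_nval_image unfolding A_eq_W nval_image_def by blast
  moreover have "\<forall>f. nc_fin f \<longrightarrow> (nval f = 0 \<longleftrightarrow> f \<in> rel_I)"
    using nval_eq_zero_imp_rel_I nval_rel_I by blast
  ultimately show ?thesis
    using gens Gamma_set_eq_W_set nval_in_W_set unfolding A_eq_W by blast
qed

end
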